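(* Let $a_0,a_1,a_2,b_0,b_1,b_2$ be real numbers and consider the Abel equation $$\frac{dx}{dt}=(a_0+a_1\cos(2\pi t)+a_2\sin(2\pi t))x^3+(b_0+b_1\cos(2\pi t)+b_2\sin(2\pi t))x^2 .$$ (a) The equation has a center at $x=0$ if and only if $a_0=b_0=a_2b_1-a_1b_2=0$. (b) If the equation does not have a center at $x=0$ and one of the conditions $a_0^2\ge a_1^2+a_2^2$, $b_0^2\ge b_1^2+b_2^2$, or $(a_2b_0-a_0b_2)^2+(a_0b_1-a_1b_0)^2\ge (a_2b_1-a_1b_2)^2$ holds, then it has at most one non-zero periodic orbit, and when this periodic orbit exists it is hyperbolic. (c) There exist choices of $a_0,a_1,a_2,b_0,b_1,b_2$ for which the equation has at least two non-zero hyperbolic periodic orbits.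
   Context: The equation is considered on the strip $[0,1]\times\mathbb{R}$. A periodic orbit is a solution $x(t)$ defined on all of $[0,1]$ with $x(0)=x(1)$; $x\equiv0$ is always one, and non-zero periodic orbits are the others. The Poincaré map is $\Pi(x_0)=x(1;x_0)$ where $x(t;x_0)$ is the solution with $x(0;x_0)=x_0$; a periodic orbit with initial condition $x_0$ is hyperbolic if $\Pi'(x_0)\ne1$. The equation has a center at the periodic orbit $x=0$ if there is a neighborhood of $0$ such that every solution starting at $t=0$ in this neighborhood is a periodic orbit. *)

theory Defs
  imports "HOL-Analysis.Analysis"
begin

definition abel_rhs :: "real \<Rightarrow> real \<Rightarrow> real \<Rightarrow> real \<Rightarrow> real \<Rightarrow> real \<Rightarrow> real \<Rightarrow> real \<Rightarrow> real" where
  "abel_rhs a0 a1 a2 b0 b1 b2 t x =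
     (a0 + a1 * cos (2 * pi * t) + a2 * sin (2 * pi * t)) * x ^ 3
   + (b0 + b1 * cos (2 * pi * t) + b2 * sin (2 * pi * t)) * x ^ 2"

definition abel_solution :: "real \<Rightarrow> real \<Rightarrow> real \<Rightarrow> real \<Rightarrow> real \<Rightarrow> real \<Rightarrow> (real \<Rightarrow> real) \<Rightarrow> bool" where
  "abel_solution a0 a1 a2 b0 b1 b2 x \<longleftrightarrow>
     (\<forall>t\<in>{0..1}. (x has_real_derivative abel_rhs a0 a1 a2 b0 b1 b2 t (x t)) (at t within {0..1}))"

definition abel_periodic_orbit :: "real \<Rightarrow> real \<Rightarrow> real \<Rightarrow> real \<Rightarrow> real \<Rightarrow> real \<Rightarrow> (real \<Rightarrow> real) \<Rightarrow> bool" where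
  "abel_periodic_orbit a0 a1 a2 b0 b1 b2 x \<longleftrightarrow>
     abel_solution a0 a1 a2 b0 b1 b2 x \<and> x 0 = x 1"

definition nonzero_orbit :: "(real \<Rightarrow> real) \<Rightarrow> bool" where
  "nonzero_orbit x \<longleftrightarrow> (\<exists>t\<in>{0..1}. x t \<noteq> 0)"

definition abel_poincare :: "real \<Rightarrow> real \<Rightarrow> real \<Rightarrow> real \<Rightarrow> real \<Rightarrow> real \<Rightarrow> real \<Rightarrow> real" where
  "abel_poincare a0 a1 a2 b0 b1 b2 x0 =
     (THE y. \<exists>x. abel_solution a0 a1 a2 b0 b1 b2 x \<and> x 0 = x0 \<and> x 1 = y)"

definition abel_hyperbolic :: "real \<Rightarrow> real \<Rightarrow> real \<Rightarrow> real \<Rightarrow> real \<Rightarrow> real \<Rightarrow> real \<Rightarrow> bool" where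
  "abel_hyperbolic a0 a1 a2 b0 b1 b2 x0 \<longleftrightarrow>
     (\<exists>D. (abel_poincare a0 a1 a2 b0 b1 b2 has_real_derivative D) (at x0) \<and> D \<noteq> 1)"

definition abel_center :: "real \<Rightarrow> real \<Rightarrow> real \<Rightarrow> real \<Rightarrow> real \<Rightarrow> real \<Rightarrow> bool" where
  "abel_center a0 a1 a2 b0 b1 b2 \<longleftrightarrow>
     (\<exists>e>0. \<forall>x0. \<bar>x0\<bar> < e \<longrightarrow>
        (\<exists>x. abel_periodic_orbit a0 a1 a2 b0 b1 b2 x \<and> x 0 = x0))"

end

theory Submission
  imports Defs
begin

lemma DERIV_nonneg_imp_increasing_Icc:
  fixes f :: "real \<Rightarrow> real"
  assumes f': "\<And>t. t \<in> {a..b} \<Longrightarrow> (f has_real_derivative f' t) (at t within {a..b})"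
    and nonneg: "\<And>t. t \<in> {a..b} \<Longrightarrow> 0 \<le> f' t" and "a \<le> s" "s \<le> t" "t \<le> b"
  shows "f s \<le> f t"
proof (rule DERIV_nonneg_imp_increasing_open[OF \<open>s \<le> t\<close>])
  fix y assume "s < y" "y < t"
  with assms have "y \<in> {a<..<b}" by auto
  then show "\<exists>D. (f has_real_derivative D) (at y) \<and> 0 \<le> D"
    using f'[of y] nonneg[of y] at_within_Icc_at[of a y b] by auto
next
  show "continuous_on {s..t} f"
    using DERIV_continuous_on[OF f'] by (rule continuous_on_subset) (use assms in auto)
qed

lemma DERIV_bound_Icc:
  fixes f :: "real \<Rightarrow> real"
  assumes "\<And>t. t \<in> {a..b} \<Longrightarrow> (f has_real_derivative f' t) (at t within {a..b})"
    and "\<And>t. t \<in> {a..b} \<Longrightarrow> \<bar>f' t\<bar> \<le> B" and "s \<in> {a..b}" "t \<in> {a..b}"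
  shows "\<bar>f t - f s\<bar> \<le> B * \<bar>t - s\<bar>"
  using field_differentiable_bound[of "{a..b}" f f' B t s] assms by auto

lemma linear_ode_explicit:
  fixes z g :: "real \<Rightarrow> real"
  assumes z': "\<And>t. t \<in> {0..1} \<Longrightarrow> (z has_real_derivative g t * z t) (at t within {0..1})"
    and g: "continuous_on {0..1} g" and t: "t \<in> {0..1}"
  shows "z t = z 0 * exp (integral {0..t} g)"
proof -
  define \<phi> where "\<phi> s = z s * exp (- integral {0..s} g)" for s
  have "(\<phi> has_real_derivative 0) (at s within {0..1})" if s: "s \<in> {0..1}" for s
    unfolding \<phi>_def
    by (rule derivative_eq_intros z'[OF s] integral_has_real_derivative[OF g s] refl
        | simp add: algebra_simps)+
  then have "\<phi> t = \<phi> 0"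
    using has_field_derivative_zero_constant[of "{0..1::real}" \<phi>] t by force
  then show ?thesis by (simp add: \<phi>_def exp_minus field_simps)
qed

lemma gronwall_abs:
  fixes z :: "real \<Rightarrow> real"
  assumes z': "\<And>t. t \<in> {0..1} \<Longrightarrow> (z has_real_derivative z' t) (at t within {0..1})"
    and bound: "\<And>t. t \<in> {0..1} \<Longrightarrow> \<bar>z' t\<bar> \<le> L * \<bar>z t\<bar>" and t: "t \<in> {0..1}"
  shows "\<bar>z t\<bar> \<le> \<bar>z 0\<bar> * exp (L * t)"
proof -
  \<comment> \<open>the energy z^2 e^(-2Lt) is nonincreasing\<close>
  define \<phi> where "\<phi> s = - (z s ^ 2 * exp (- (2 * L) * s))" for s
  define \<phi>' where "\<phi>' s = 2 * (L * z s ^ 2 - z s * z' s) * exp (- (2 * L) * s)" for s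
  have \<phi>': "(\<phi> has_real_derivative \<phi>' s) (at s within {0..1})" if "s \<in> {0..1}" for s
    unfolding \<phi>_def \<phi>'_def
    by (rule derivative_eq_intros z'[OF that] refl | simp add: algebra_simps)+
  have "0 \<le> \<phi>' s" if "s \<in> {0..1}" for s
  proof -
    have "z s * z' s \<le> \<bar>z s\<bar> * \<bar>z' s\<bar>" by (simp add: abs_mult[symmetric])
    also have "\<dots> \<le> \<bar>z s\<bar> * (L * \<bar>z s\<bar>)" by (intro mult_left_mono bound that) simp
    also have "\<dots> = L * z s ^ 2" by (simp add: power2_eq_square)
    finally show ?thesis by (simp add: \<phi>'_def)
  qed
  then have "\<phi> 0 \<le> \<phi> t" using t by (intro DERIV_nonneg_imp_increasing_Icc[OF \<phi>']) auto
  then have "z t ^ 2 \<le> z 0 ^ 2 * exp (2 * L * t)"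
    by (simp add: \<phi>_def exp_minus field_simps)
  also have "\<dots> = (\<bar>z 0\<bar> * exp (L * t)) ^ 2"
    by (simp add: power_mult_distrib exp_double[symmetric] mult.assoc)
  finally have "\<bar>z t\<bar> ^ 2 \<le> (\<bar>z 0\<bar> * exp (L * t)) ^ 2" by simp
  then show ?thesis by (rule power2_le_imp_le) simp
qed

lemma closed_loop_integral_zero:
  fixes x h :: "real \<Rightarrow> real"
  assumes x': "\<And>t. t \<in> {0..1} \<Longrightarrow> (x has_real_derivative x' t) (at t within {0..1})"
    and loop: "x 0 = x 1" and h: "continuous_on (x ` {0..1}) h"
  shows "((\<lambda>t. h (x t) * x' t) has_integral 0) {0..1}"
proof -
  obtain m M where mM: "x ` {0..1} = {m..M}"
    using continuous_image_closed_interval[OF _ DERIV_continuous_on[OF x']] by auto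
  have "((\<lambda>t. x' t *\<^sub>R h (x t)) has_integral integral {x 0..x 1} h - integral {x 1..x 0} h) {0..1}"
    by (rule has_integral_substitution_general[of "{}"])
      (use mM h x' DERIV_continuous_on[OF x'] in auto)
  then show ?thesis using loop by (simp add: mult.commute)
qed

lemma integral_pos_if_pos_somewhere:
  fixes f :: "real \<Rightarrow> real"
  assumes "a < b" and f: "continuous_on {a..b} f" and nonneg: "\<And>t. t \<in> {a..b} \<Longrightarrow> 0 \<le> f t"
    and t0: "t0 \<in> {a..b}" "0 < f t0"
  shows "0 < integral {a..b} f"
proof -
  have int: "(f has_integral integral {a..b} f) {a..b}"
    using f by (intro integrable_integral integrable_continuous_interval)
  have "integral {a..b} f \<noteq> 0"
  proof
    assume "integral {a..b} f = 0"
    then have I0: "(f has_integral 0) (cbox a b)" using int by simp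
    have "f t0 = 0"
      by (rule has_integral_0_cbox_imp_0[of a b f, OF _ _ I0]) (use f nonneg t0 \<open>a < b\<close> in \<open>auto simp: cbox_interval box_real\<close>)
    with t0 show False by simp
  qed
  moreover have "0 \<le> integral {a..b} f"
    by (rule has_integral_nonneg[OF int nonneg])
  ultimately show ?thesis by simp
qed

lemma continuous_nonvanishing_fixed_sign:
  fixes g :: "real \<Rightarrow> real"
  assumes g: "continuous_on {a..b} g" and nz: "\<And>t. t \<in> {a..b} \<Longrightarrow> g t \<noteq> 0"
  shows "(\<forall>t\<in>{a..b}. 0 < g t) \<or> (\<forall>t\<in>{a..b}. g t < 0)"
proof (rule ccontr)
  assume "\<not> ?thesis"
  then obtain s t where st: "s \<in> {a..b}" "t \<in> {a..b}" "0 < g s" "g t < 0"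
    using nz by (meson linorder_neqE_linordered_idom)
  have "connected (g ` {a..b})" by (rule connected_continuous_image[OF g connected_Icc])
  then have "{g t..g s} \<subseteq> g ` {a..b}"
    by (rule connected_contains_Icc) (use st in auto)
  then have "0 \<in> g ` {a..b}" using st by auto
  then show False using nz by auto
qed

lemma eq_0_if_abs_le_linear:
  fixes c D \<eta> :: real
  assumes "0 < \<eta>" "\<And>\<xi>. 0 < \<xi> \<Longrightarrow> \<xi> < \<eta> \<Longrightarrow> \<bar>c\<bar> \<le> D * \<xi>"
  shows "c = 0"
proof -
  have "\<bar>c\<bar> \<le> 0 + e" if "0 < e" for e
  proof -
    define \<xi> where "\<xi> = min (\<eta> / 2) (e / (\<bar>D\<bar> + 1))"
    have "0 < \<xi>" "\<xi> < \<eta>" using assms that by (auto simp: \<xi>_def)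
    then have "\<bar>c\<bar> \<le> \<bar>D\<bar> * \<xi>" using assms(2) abs_ge_self[of D] by (meson mult_right_mono less_imp_le order_trans)
    also have "\<dots> \<le> \<bar>D\<bar> * (e / (\<bar>D\<bar> + 1))" by (intro mult_left_mono) (auto simp: \<xi>_def)
    also have "\<dots> \<le> e" using that by (simp add: field_simps)
    finally show ?thesis by simp
  qed
  then show ?thesis by (metis abs_ge_zero abs_le_zero_iff field_le_epsilon)
qed

lemma continuous_on_unit_interval_integrable:
  fixes g :: "real \<Rightarrow> real"
  assumes "continuous_on {0..1} g" "t \<in> {0..1}"
  shows "g integrable_on {0..t}"
  using assms by (intro integrable_continuous_interval continuous_on_subset[OF assms(1)]) auto

lemma picard_iterate_difference_bound:
  fixes F :: "real \<Rightarrow> real \<Rightarrow> real" and P :: "nat \<Rightarrow> real \<Rightarrow> real"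
  assumes P0: "P 0 = (\<lambda>t. \<xi>)"
    and PSuc: "\<And>n t. P (Suc n) t = \<xi> + integral {0..t} (\<lambda>s. F s (P n s))"
    and cont: "\<And>n. continuous_on {0..1} (\<lambda>s. F s (P n s))"
    and lip: "\<And>s u v. s \<in> {0..1} \<Longrightarrow> \<bar>F s u - F s v\<bar> \<le> L * \<bar>u - v\<bar>" and "0 \<le> L"
    and K: "\<And>s. s \<in> {0..1} \<Longrightarrow> \<bar>F s \<xi>\<bar> \<le> K"
    and t: "t \<in> {0..1}"
  shows "\<bar>P (Suc n) t - P n t\<bar> \<le> K * (L * t) ^ n / fact n"
  using t
proof (induction n arbitrary: t)
  case 0
  have "\<bar>integral {0..t} (\<lambda>s. F s \<xi>)\<bar> \<le> integral {0..t} (\<lambda>s. K)"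
    by (rule integral_norm_bound_integral[where 'a=real, simplified])
      (use 0 K continuous_on_unit_interval_integrable[OF cont[of 0] 0] in \<open>auto simp: P0\<close>)
  also have "\<dots> \<le> K"
    using 0 K[of 0] by (simp add: mult_left_le_one_le)
  finally show ?case by (simp add: PSuc P0)
next
  case (Suc n)
  let ?d = "\<lambda>s. F s (P (Suc n) s) - F s (P n s)"
  let ?c = "L * (K * L ^ n / fact n)"
  have "((\<lambda>s. s ^ Suc n / Suc n) has_real_derivative s ^ n) (at s within {0..t})" for s
    by (intro derivative_eq_intros) auto
  then have "((\<lambda>s. s ^ n) has_integral t ^ Suc n / Suc n - 0 ^ Suc n / Suc n) {0..t}"
    using Suc.prems
    by (intro fundamental_theorem_of_calculus) (auto simp: has_real_derivative_iff_has_vector_derivative)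
  then have int: "((\<lambda>s. ?c * s ^ n) has_integral ?c * (t ^ Suc n / Suc n)) {0..t}"
    by (intro has_integral_mult_right) simp
  have "P (Suc (Suc n)) t - P (Suc n) t = integral {0..t} ?d"
    unfolding PSuc[of "Suc n" t] PSuc[of n t] using Suc.prems
    by (simp add: integral_diff continuous_on_unit_interval_integrable[OF cont])
  also have "\<bar>\<dots>\<bar> \<le> integral {0..t} (\<lambda>s. ?c * s ^ n)"
  proof (rule integral_norm_bound_integral[where 'a=real, simplified])
    show "?d integrable_on {0..t}"
      using Suc.prems by (intro integrable_diff continuous_on_unit_interval_integrable[OF cont])
    show "(\<lambda>s. ?c * s ^ n) integrable_on {0..t}" using int by blast
    fix s assume "s \<in> {0..t}"
    then have s: "s \<in> {0..1}" using Suc.prems by auto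
    have "\<bar>?d s\<bar> \<le> L * \<bar>P (Suc n) s - P n s\<bar>" by (rule lip[OF s])
    also have "\<dots> \<le> L * (K * (L * s) ^ n / fact n)" by (intro mult_left_mono Suc.IH s \<open>0 \<le> L\<close>)
    finally show "\<bar>?d s\<bar> \<le> ?c * s ^ n" by (simp add: power_mult_distrib)
  qed
  also have "\<dots> = ?c * (t ^ Suc n / Suc n)" by (rule integral_unique[OF int])
  also have "\<dots> = K * (L * t) ^ Suc n / fact (Suc n)"
    by (simp add: power_mult_distrib mult_ac)
  finally show ?case .
qed

lemma uniform_limit_compose_lipschitz:
  fixes f :: "'i \<Rightarrow> 'a \<Rightarrow> real" and H :: "'a \<Rightarrow> real \<Rightarrow> real"
  assumes lim: "uniform_limit S f g F"
    and lip: "\<And>s u v. s \<in> S \<Longrightarrow> \<bar>H s u - H s v\<bar> \<le> L * \<bar>u - v\<bar>" and "0 \<le> L"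
  shows "uniform_limit S (\<lambda>n s. H s (f n s)) (\<lambda>s. H s (g s)) F"
proof (rule uniform_limitI)
  fix e :: real assume "0 < e"
  then have "0 < e / (L + 1)" using \<open>0 \<le> L\<close> by simp
  with lim have "\<forall>\<^sub>F n in F. \<forall>s\<in>S. dist (f n s) (g s) < e / (L + 1)"
    by (rule uniform_limitD)
  then show "\<forall>\<^sub>F n in F. \<forall>s\<in>S. dist (H s (f n s)) (H s (g s)) < e"
  proof eventually_elim
    case (elim n)
    show ?case
    proof
      fix s assume s: "s \<in> S"
      have "dist (H s (f n s)) (H s (g s)) \<le> L * dist (f n s) (g s)"
        using lip[OF s] by (simp add: dist_real_def)
      also have "\<dots> \<le> L * (e / (L + 1))"
        using elim s \<open>0 \<le> L\<close> by (intro mult_left_mono) auto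
      also have "\<dots> < e" using \<open>0 < e\<close> \<open>0 \<le> L\<close> by (simp add: field_simps)
      finally show "dist (H s (f n s)) (H s (g s)) < e" .
    qed
  qed
qed

lemma picard_iterates_converge:
  fixes F :: "real \<Rightarrow> real \<Rightarrow> real" and P :: "nat \<Rightarrow> real \<Rightarrow> real"
  assumes P0: "P 0 = (\<lambda>t. \<xi>)"
    and PSuc: "\<And>n t. P (Suc n) t = \<xi> + integral {0..t} (\<lambda>s. F s (P n s))"
    and cont: "\<And>n. continuous_on {0..1} (\<lambda>s. F s (P n s))"
    and lip: "\<And>s u v. s \<in> {0..1} \<Longrightarrow> \<bar>F s u - F s v\<bar> \<le> L * \<bar>u - v\<bar>" and L: "0 \<le> L"
    and K: "\<And>s. s \<in> {0..1} \<Longrightarrow> \<bar>F s \<xi>\<bar> \<le> K"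
  obtains x where "uniform_limit {0..1} P x sequentially"
proof -
  define d where "d n t = P (Suc n) t - P n t" for n t
  have d_bound: "norm (d n t) \<le> K * (L ^ n / fact n)" if t: "t \<in> {0..1}" for n t
  proof -
    have "\<bar>d n t\<bar> \<le> K * (L * t) ^ n / fact n"
      unfolding d_def by (rule picard_iterate_difference_bound[OF P0 PSuc cont lip L K t])
    also have "\<dots> \<le> K * (L ^ n / fact n)"
    proof -
      have "0 \<le> K" using K[of 0] by (meson abs_ge_zero atLeastAtMost_iff order_trans zero_le_one order_refl)
      moreover have "(L * t) ^ n \<le> L ^ n"
        using t L by (intro power_mono) (auto simp: mult_left_le)
      ultimately show ?thesis by (simp add: divide_right_mono mult_left_mono)
    qed
    finally show ?thesis by simp
  qed
  have "summable (\<lambda>n. K * (L ^ n / fact n))"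
    using summable_mult[OF summable_exp[of L], of K] by (simp add: divide_inverse mult_ac)
  with d_bound have "uniform_limit {0..1} (\<lambda>n t. \<Sum>i<n. d i t) (\<lambda>t. \<Sum>i. d i t) sequentially"
    by (rule Weierstrass_m_test)
  then have "uniform_limit {0..1} (\<lambda>n t. \<xi> + (\<Sum>i<n. d i t)) (\<lambda>t. \<xi> + (\<Sum>i. d i t)) sequentially"
    by (rule uniform_limit_add[OF uniform_limit_const])
  moreover have "\<xi> + (\<Sum>i<n. d i t) = P n t" for n t
    using sum_lessThan_telescope[of "\<lambda>i. P i t" n] by (simp add: d_def P0)
  ultimately show ?thesis using that by simp
qed

lemma picard_existence:
  fixes F :: "real \<Rightarrow> real \<Rightarrow> real"
  assumes cont: "\<And>\<phi>. continuous_on {0..1} \<phi> \<Longrightarrow> continuous_on {0..1} (\<lambda>s. F s (\<phi> s))"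
    and lip: "\<And>s u v. s \<in> {0..1} \<Longrightarrow> \<bar>F s u - F s v\<bar> \<le> L * \<bar>u - v\<bar>"
  obtains x where "x 0 = \<xi>"
    "\<And>t. t \<in> {0..1} \<Longrightarrow> (x has_real_derivative F t (x t)) (at t within {0..1})"
proof -
  have "\<bar>F 0 1 - F 0 0\<bar> \<le> L" using lip[of 0 1 0] by simp
  then have L: "0 \<le> L" by (meson abs_ge_zero order_trans)
  have integral_cont: "continuous_on {0..1} (\<lambda>t. integral {0..t} g)"
    if "continuous_on {0..1} g" for g :: "real \<Rightarrow> real"
    by (rule DERIV_continuous_on[OF integral_has_real_derivative[OF that]])
  define P where "P = rec_nat (\<lambda>t. \<xi>) (\<lambda>n p t. \<xi> + integral {0..t} (\<lambda>s. F s (p s)))"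
  have P0: "P 0 = (\<lambda>t. \<xi>)" and PSuc: "P (Suc n) = (\<lambda>t. \<xi> + integral {0..t} (\<lambda>s. F s (P n s)))"
    for n by (simp_all add: P_def)
  then have PSuc_at: "P (Suc n) t = \<xi> + integral {0..t} (\<lambda>s. F s (P n s))" for n t by simp
  have P_cont: "continuous_on {0..1} (P n)" for n
  proof (induction n)
    case (Suc n)
    show ?case unfolding PSuc by (intro continuous_on_add continuous_on_const integral_cont cont Suc.IH)
  qed (simp add: P0)
  obtain K where K: "\<And>s. s \<in> {0..1} \<Longrightarrow> \<bar>F s \<xi>\<bar> \<le> K"
    using continuous_on_compact_bound[OF compact_Icc cont[OF continuous_on_const[of _ \<xi>]]] by auto
  obtain x where P_lim: "uniform_limit {0..1} P x sequentially"
    by (rule picard_iterates_converge[where P=P and F=F, OF P0 PSuc_at cont[OF P_cont] lip L K])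
  have x_cont: "continuous_on {0..1} x"
    by (rule uniform_limit_theorem[OF _ P_lim]) (simp_all add: P_cont)
  have FP_lim: "uniform_limit {0..1} (\<lambda>n s. F s (P n s)) (\<lambda>s. F s (x s)) sequentially"
    by (rule uniform_limit_compose_lipschitz[OF P_lim lip L])
  have x_eq: "x t = \<xi> + integral {0..t} (\<lambda>s. F s (x s))" if t: "t \<in> {0..1}" for t
  proof -
    have sub: "{0..t} \<subseteq> {0..1}" using t by auto
    obtain I J where I: "\<And>n. ((\<lambda>s. F s (P n s)) has_integral I n) {0..t}"
      and J: "((\<lambda>s. F s (x s)) has_integral J) {0..t}" and IJ: "I \<longlonglongrightarrow> J"
      by (rule uniform_limit_integral[OF uniform_limit_on_subset[OF FP_lim sub]])
        (auto intro: continuous_on_subset[OF cont[OF P_cont] sub])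
    have "(\<lambda>n. P (Suc n) t) = (\<lambda>n. \<xi> + I n)"
      using integral_unique[OF I] by (simp add: PSuc_at)
    then have "(\<lambda>n. P (Suc n) t) \<longlonglongrightarrow> \<xi> + J"
      using IJ by (simp add: tendsto_add)
    moreover have "(\<lambda>n. P (Suc n) t) \<longlonglongrightarrow> x t"
      using tendsto_uniform_limitI[OF P_lim t] by (rule LIMSEQ_Suc)
    ultimately have "x t = \<xi> + J" by (rule LIMSEQ_unique[rotated])
    then show ?thesis using J by (simp add: integral_unique)
  qed
  define y where "y t = \<xi> + integral {0..t} (\<lambda>s. F s (x s))" for t
  show ?thesis
  proof
    show "y 0 = \<xi>" by (simp add: y_def)
    fix t :: real assume t: "t \<in> {0..1}"
    have "(y has_real_derivative F t (x t)) (at t within {0..1})"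
      unfolding y_def[abs_def] using integral_has_real_derivative[OF cont[OF x_cont] t]
      by (intro derivative_eq_intros) auto
    then show "(y has_real_derivative F t (y t)) (at t within {0..1})"
      using x_eq[OF t] by (simp add: y_def)
  qed
qed

lemma abs_integral_unit_interval_le:
  fixes f :: "real \<Rightarrow> real"
  assumes "continuous_on {0..1} f" "\<And>t. t \<in> {0..1} \<Longrightarrow> \<bar>f t\<bar> \<le> c"
  shows "\<bar>integral {0..1} f\<bar> \<le> c"
  using integral_norm_bound_integral[of f "{0..1}" "\<lambda>t. c"] assms
  by (simp add: integrable_continuous_interval)

lemma has_real_derivative_if_difference_quotient_exp:
  fixes P I :: "real \<Rightarrow> real"
  assumes "\<forall>\<^sub>F \<xi> in at \<xi>0. P \<xi> - P \<xi>0 = (\<xi> - \<xi>0) * exp (I \<xi>)" and "(I \<longlongrightarrow> M) (at \<xi>0)"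
  shows "(P has_real_derivative exp M) (at \<xi>0)"
  unfolding has_field_derivative_iff
proof (rule Lim_transform_eventually)
  show "((\<lambda>\<xi>. exp (I \<xi>)) \<longlongrightarrow> exp M) (at \<xi>0)" by (intro tendsto_intros assms(2))
  have "\<forall>\<^sub>F \<xi> in at \<xi>0. \<xi> \<noteq> \<xi>0" by (simp add: eventually_at_filter)
  with assms(1) show "\<forall>\<^sub>F \<xi> in at \<xi>0. exp (I \<xi>) = (P \<xi> - P \<xi>0) / (\<xi> - \<xi>0)"
    by eventually_elim simp
qed

definition trig_poly :: "real \<Rightarrow> real \<Rightarrow> real \<Rightarrow> real \<Rightarrow> real" where
  "trig_poly c0 c1 c2 t = c0 + c1 * cos (2 * pi * t) + c2 * sin (2 * pi * t)"

lemma continuous_on_trig_poly [continuous_intros]: "continuous_on S (trig_poly c0 c1 c2)"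
  unfolding trig_poly_def by (intro continuous_intros)

lemma abs_trig_poly_le: "\<bar>trig_poly c0 c1 c2 t\<bar> \<le> \<bar>c0\<bar> + \<bar>c1\<bar> + \<bar>c2\<bar>"
proof -
  have "\<bar>c1 * cos (2 * pi * t)\<bar> \<le> \<bar>c1\<bar>" "\<bar>c2 * sin (2 * pi * t)\<bar> \<le> \<bar>c2\<bar>"
    by (simp_all add: abs_mult mult_left_le)
  then show ?thesis unfolding trig_poly_def by linarith
qed

lemma trig_poly_lincomb:
  "a * trig_poly a0 a1 a2 t + b * trig_poly b0 b1 b2 t
     = trig_poly (a * a0 + b * b0) (a * a1 + b * b1) (a * a2 + b * b2) t"
  by (simp add: trig_poly_def algebra_simps)

lemma has_integral_trig_poly: "(trig_poly c0 c1 c2 has_integral c0) {0..1}"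
proof -
  define F where "F t = c0 * t + c1 * sin (2 * pi * t) / (2 * pi) - c2 * cos (2 * pi * t) / (2 * pi)" for t
  have "(trig_poly c0 c1 c2 has_integral F 1 - F 0) {0..1}"
  proof (rule fundamental_theorem_of_calculus)
    fix t :: real
    have "(F has_real_derivative trig_poly c0 c1 c2 t) (at t within {0..1})"
      unfolding F_def trig_poly_def by (rule derivative_eq_intros refl | simp)+
    then show "(F has_vector_derivative trig_poly c0 c1 c2 t) (at t within {0..1})"
      by (simp add: has_real_derivative_iff_has_vector_derivative)
  qed simp
  then show ?thesis by (simp add: F_def)
qed

lemma trig_poly_nonneg:
  assumes "q\<^sup>2 + r\<^sup>2 \<le> p\<^sup>2" "0 \<le> p"
  shows "0 \<le> trig_poly p q r t"
proof -
  let ?c = "cos (2 * pi * t)" and ?s = "sin (2 * pi * t)"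
  have lagrange: "(q * c + r * s)\<^sup>2 + (q * s - r * c)\<^sup>2 = (q\<^sup>2 + r\<^sup>2) * (c\<^sup>2 + s\<^sup>2)" for c s :: real
    by (simp add: power2_eq_square algebra_simps)
  have "(q * ?c + r * ?s)\<^sup>2 + (q * ?s - r * ?c)\<^sup>2 = (q\<^sup>2 + r\<^sup>2) * (?c\<^sup>2 + ?s\<^sup>2)"
    by (rule lagrange)
  then have "(q * ?c + r * ?s)\<^sup>2 \<le> (q\<^sup>2 + r\<^sup>2) * (?c\<^sup>2 + ?s\<^sup>2)"
    by (metis le_add_same_cancel1 zero_le_power2)
  also have "\<dots> \<le> p\<^sup>2" using assms(1) by simp
  finally have "(q * ?c + r * ?s)\<^sup>2 \<le> p\<^sup>2" .
  then have "\<bar>q * ?c + r * ?s\<bar> \<le> \<bar>p\<bar>" by (simp only: abs_le_square_iff)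
  then show ?thesis using assms(2) unfolding trig_poly_def by linarith
qed

lemma trig_poly_eq_0_on_interior_imp_coeffs:
  assumes "\<forall>t\<in>{0<..<1}. trig_poly c0 c1 c2 t = 0"
  shows "c0 = 0 \<and> c1 = 0 \<and> c2 = 0"
proof -
  have "trig_poly c0 c1 c2 (1/4) = 0" "trig_poly c0 c1 c2 (1/2) = 0" "trig_poly c0 c1 c2 (3/4) = 0"
    using assms by auto
  moreover have "cos (2 * pi * (3/4)) = 0" "sin (2 * pi * (3/4)) = -1"
    using cos_periodic_pi[of "pi/2"] sin_periodic_pi[of "pi/2"] by (simp_all add: field_simps)
  ultimately show ?thesis by (simp add: trig_poly_def)
qed

definition abel_coeff_norm :: "real \<Rightarrow> real \<Rightarrow> real \<Rightarrow> real \<Rightarrow> real \<Rightarrow> real \<Rightarrow> real" where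
  "abel_coeff_norm a0 a1 a2 b0 b1 b2 = \<bar>a0\<bar> + \<bar>a1\<bar> + \<bar>a2\<bar> + \<bar>b0\<bar> + \<bar>b1\<bar> + \<bar>b2\<bar>"

locale abel_equation =
  fixes a0 a1 a2 b0 b1 b2 :: real
begin

abbreviation "A \<equiv> trig_poly a0 a1 a2"
abbreviation "B \<equiv> trig_poly b0 b1 b2"
abbreviation "rhs \<equiv> abel_rhs a0 a1 a2 b0 b1 b2"
abbreviation "solution \<equiv> abel_solution a0 a1 a2 b0 b1 b2"
abbreviation "periodic_orbit \<equiv> abel_periodic_orbit a0 a1 a2 b0 b1 b2"
abbreviation "poincare \<equiv> abel_poincare a0 a1 a2 b0 b1 b2"
abbreviation "hyperbolic \<equiv> abel_hyperbolic a0 a1 a2 b0 b1 b2"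
abbreviation "center \<equiv> abel_center a0 a1 a2 b0 b1 b2"
abbreviation "coeff_norm \<equiv> abel_coeff_norm a0 a1 a2 b0 b1 b2"

lemma rhs_eq: "rhs t x = A t * x ^ 3 + B t * x ^ 2"
  by (simp add: abel_rhs_def trig_poly_def)

lemma abs_coeffs_le_coeff_norm: "\<bar>A t\<bar> \<le> coeff_norm" "\<bar>B t\<bar> \<le> coeff_norm"
  using abs_trig_poly_le[of a0 a1 a2 t] abs_trig_poly_le[of b0 b1 b2 t]
    abs_ge_zero[of a0] abs_ge_zero[of a1] abs_ge_zero[of a2]
    abs_ge_zero[of b0] abs_ge_zero[of b1] abs_ge_zero[of b2]
  unfolding abel_coeff_norm_def by linarith+

lemma coeff_norm_nonneg: "0 \<le> coeff_norm"
  by (simp add: abel_coeff_norm_def)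

text \<open>The difference quotient of the right-hand side in x; on the diagonal it is the partial derivative.\<close>

definition rhs_slope :: "real \<Rightarrow> real \<Rightarrow> real \<Rightarrow> real" where
  "rhs_slope t u v = A t * (u\<^sup>2 + u * v + v\<^sup>2) + B t * (u + v)"

lemma rhs_diff_eq: "rhs t u - rhs t v = rhs_slope t u v * (u - v)"
  by (simp add: rhs_eq rhs_slope_def algebra_simps power2_eq_square power3_eq_cube)

lemma rhs_slope_diag: "rhs_slope t u u = 3 * A t * u\<^sup>2 + 2 * B t * u"
  by (simp add: rhs_slope_def power2_eq_square algebra_simps)

lemma abs_rhs_slope_le:
  assumes "\<bar>u\<bar> \<le> M" "\<bar>v\<bar> \<le> M" "coeff_norm \<le> K"
  shows "\<bar>rhs_slope t u v\<bar> \<le> 3 * K * M\<^sup>2 + 2 * K * M"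
proof -
  have M: "0 \<le> M" and K: "0 \<le> K" using assms coeff_norm_nonneg by linarith+
  have "\<bar>u\<^sup>2 + u * v + v\<^sup>2\<bar> \<le> \<bar>u\<bar> * \<bar>u\<bar> + \<bar>u\<bar> * \<bar>v\<bar> + \<bar>v\<bar> * \<bar>v\<bar>"
    by (simp add: abs_mult power2_eq_square abs_triangle_ineq order_trans[OF abs_triangle_ineq])
  also have "\<dots> \<le> 3 * M\<^sup>2"
    using assms mult_mono[OF assms(1) assms(1)] mult_mono[OF assms(1) assms(2)] mult_mono[OF assms(2) assms(2)]
    by (simp add: power2_eq_square)
  finally have quad: "\<bar>u\<^sup>2 + u * v + v\<^sup>2\<bar> \<le> 3 * M\<^sup>2" .
  have "\<bar>rhs_slope t u v\<bar> \<le> \<bar>A t\<bar> * \<bar>u\<^sup>2 + u * v + v\<^sup>2\<bar> + \<bar>B t\<bar> * \<bar>u + v\<bar>"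
    unfolding rhs_slope_def abs_mult[symmetric] by (rule abs_triangle_ineq)
  also have "\<dots> \<le> K * (3 * M\<^sup>2) + K * (2 * M)"
    using quad assms abs_coeffs_le_coeff_norm[of t] K
    by (intro add_mono mult_mono) auto
  finally show ?thesis by simp
qed

lemma solution_has_derivative:
  "solution x \<Longrightarrow> t \<in> {0..1} \<Longrightarrow> (x has_real_derivative rhs t (x t)) (at t within {0..1})"
  by (simp add: abel_solution_def)

lemma solution_continuous: "solution x \<Longrightarrow> continuous_on {0..1} x"
  by (rule DERIV_continuous_on) (rule solution_has_derivative)

lemma solution_zero: "solution (\<lambda>t. 0)"
  by (simp add: abel_solution_def abel_rhs_def)

lemma solution_difference:
  assumes x: "solution x" and y: "solution y" and t: "t \<in> {0..1}"
  shows "x t - y t = (x 0 - y 0) * exp (integral {0..t} (\<lambda>s. rhs_slope s (x s) (y s)))"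
proof -
  have "(\<lambda>s. x s - y s) t = (\<lambda>s. x s - y s) 0 * exp (integral {0..t} (\<lambda>s. rhs_slope s (x s) (y s)))"
  proof (rule linear_ode_explicit[OF _ _ t])
    fix s :: real assume s: "s \<in> {0..1}"
    have "((\<lambda>s. x s - y s) has_real_derivative rhs s (x s) - rhs s (y s)) (at s within {0..1})"
      by (intro derivative_intros solution_has_derivative[OF x s] solution_has_derivative[OF y s])
    then show "((\<lambda>s. x s - y s) has_real_derivative rhs_slope s (x s) (y s) * (x s - y s)) (at s within {0..1})"
      by (simp add: rhs_diff_eq)
  next
    show "continuous_on {0..1} (\<lambda>s. rhs_slope s (x s) (y s))"
      unfolding rhs_slope_def using solution_continuous[OF x] solution_continuous[OF y]
      by (intro continuous_intros)
  qed
  then show ?thesis by simp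
qed

lemma solution_unique:
  assumes "solution x" "solution y" "t0 \<in> {0..1}" "x t0 = y t0" "t \<in> {0..1}"
  shows "x t = y t"
  using solution_difference[OF assms(1,2,3)] solution_difference[OF assms(1,2,5)] assms(4) by simp

lemma solution_less:
  assumes "solution x" "solution y" "x 0 < y 0" "t \<in> {0..1}"
  shows "x t < y t"
proof -
  have "x t - y t < 0" using solution_difference[OF assms(1,2,4)] assms(3) by (simp add: mult_neg_pos)
  then show ?thesis by simp
qed

lemma solution_pos: "solution x \<Longrightarrow> 0 < x 0 \<Longrightarrow> t \<in> {0..1} \<Longrightarrow> 0 < x t"
  using solution_less[OF solution_zero, of x t] by simp

lemma solution_neg: "solution x \<Longrightarrow> x 0 < 0 \<Longrightarrow> t \<in> {0..1} \<Longrightarrow> x t < 0"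
  using solution_less[OF _ solution_zero, of x t] by simp

lemma nonzero_solution_never_zero:
  assumes x: "solution x" and "nonzero_orbit x" and t: "t \<in> {0..1}"
  shows "x t \<noteq> 0"
proof
  assume "x t = 0"
  then have "x s = 0" if "s \<in> {0..1}" for s using solution_unique[OF x solution_zero t _ that] by simp
  with \<open>nonzero_orbit x\<close> show False by (auto simp: nonzero_orbit_def)
qed

lemma poincare_solution:
  assumes x: "solution x"
  shows "poincare (x 0) = x 1"
  unfolding abel_poincare_def
proof (rule the_equality)
  show "\<exists>y. solution y \<and> y 0 = x 0 \<and> y 1 = x 1" using x by blast
  fix c assume "\<exists>y. solution y \<and> y 0 = x 0 \<and> y 1 = c"
  then show "c = x 1" using solution_unique[OF x, of _ 0 1] by force
qed

end

context abel_equation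
begin

lemma solution_near:
  assumes xs: "solution xs" and R: "\<And>t. t \<in> {0..1} \<Longrightarrow> \<bar>xs t\<bar> \<le> R"
    and L: "3 * coeff_norm * (R + 1)\<^sup>2 + 2 * coeff_norm * (R + 1) \<le> L"
    and \<xi>: "\<bar>\<xi> - xs 0\<bar> < exp (- L)"
  obtains x where "solution x" "x 0 = \<xi>" "\<And>t. t \<in> {0..1} \<Longrightarrow> \<bar>x t - xs t\<bar> \<le> exp L * \<bar>\<xi> - xs 0\<bar>"
proof -
  have "0 \<le> R" using R[of 0] by simp
  then have L0: "0 \<le> L" using L coeff_norm_nonneg by (smt (verit) mult_nonneg_nonneg zero_le_power2)
  \<comment> \<open>Clamping to the unit tube around xs makes the equation globally Lipschitz;
      by Gronwall the solution of the clamped equation never reaches the wall of the tube.\<close>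
  define cl where "cl t u = max (xs t - 1) (min (xs t + 1) u)" for t u
  define F where "F t u = rhs t (cl t u)" for t u
  have xs_cont: "continuous_on {0..1} xs" by (rule solution_continuous[OF xs])
  have cont: "continuous_on {0..1} (\<lambda>s. F s (\<phi> s))" if "continuous_on {0..1} \<phi>" for \<phi>
    unfolding F_def cl_def rhs_eq
    by (intro continuous_intros continuous_on_max continuous_on_min xs_cont that)
  have lip: "\<bar>F s u - F s v\<bar> \<le> L * \<bar>u - v\<bar>" if s: "s \<in> {0..1}" for s u v
  proof -
    have bound: "\<bar>cl s w\<bar> \<le> R + 1" for w
      using R[OF s] unfolding cl_def by (auto simp: max_def min_def abs_if split: if_splits)
    have "\<bar>F s u - F s v\<bar> = \<bar>rhs_slope s (cl s u) (cl s v)\<bar> * \<bar>cl s u - cl s v\<bar>"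
      unfolding F_def rhs_diff_eq abs_mult ..
    also have "\<dots> \<le> L * \<bar>u - v\<bar>"
    proof (rule mult_mono)
      show "\<bar>rhs_slope s (cl s u) (cl s v)\<bar> \<le> L"
        using abs_rhs_slope_le[OF bound[of u] bound[of v] order_refl, where t=s] L by linarith
      show "\<bar>cl s u - cl s v\<bar> \<le> \<bar>u - v\<bar>"
        unfolding cl_def max_def min_def by auto
    qed (use L0 in auto)
    finally show ?thesis .
  qed
  obtain x where x0: "x 0 = \<xi>"
    and x': "\<And>t. t \<in> {0..1} \<Longrightarrow> (x has_real_derivative F t (x t)) (at t within {0..1})"
    using picard_existence[OF cont lip] by blast
  have xs': "(xs has_real_derivative F t (xs t)) (at t within {0..1})" if "t \<in> {0..1}" for t
    using solution_has_derivative[OF xs that] by (simp add: F_def cl_def)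
  have close: "\<bar>x t - xs t\<bar> \<le> exp L * \<bar>\<xi> - xs 0\<bar>" if t: "t \<in> {0..1}" for t
  proof -
    have "\<bar>x t - xs t\<bar> \<le> \<bar>x 0 - xs 0\<bar> * exp (L * t)"
    proof (rule gronwall_abs[OF _ _ t])
      fix s :: real assume s: "s \<in> {0..1}"
      show "((\<lambda>t. x t - xs t) has_real_derivative F s (x s) - F s (xs s)) (at s within {0..1})"
        by (intro derivative_intros x' xs' s)
      show "\<bar>F s (x s) - F s (xs s)\<bar> \<le> L * \<bar>x s - xs s\<bar>" by (rule lip[OF s])
    qed
    also have "\<dots> \<le> \<bar>\<xi> - xs 0\<bar> * exp L"
    proof -
      have "L * t \<le> L" using t L0 by (simp add: mult_left_le)
      then show ?thesis by (simp add: x0 mult_left_mono)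
    qed
    finally show ?thesis by (simp add: mult.commute)
  qed
  have "solution x"
    unfolding abel_solution_def
  proof
    fix t :: real assume t: "t \<in> {0..1}"
    have "exp L * \<bar>\<xi> - xs 0\<bar> < exp L * exp (- L)" using \<xi> by simp
    then have "\<bar>x t - xs t\<bar> < 1" using close[OF t] by (simp add: exp_minus)
    then have "cl t (x t) = x t" by (auto simp: cl_def)
    then show "(x has_real_derivative rhs t (x t)) (at t within {0..1})"
      using x'[OF t] by (simp add: F_def)
  qed
  then show ?thesis using that x0 close by blast
qed

definition multiplier_exponent :: "(real \<Rightarrow> real) \<Rightarrow> real" where
  "multiplier_exponent x = integral {0..1} (\<lambda>t. 3 * A t * (x t)\<^sup>2 + 2 * B t * x t)"

lemma abs_integral_rhs_slope_diff_le:
  assumes x: "continuous_on {0..1} x" and y: "continuous_on {0..1} y"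
    and R: "\<And>t. t \<in> {0..1} \<Longrightarrow> \<bar>y t\<bar> \<le> R"
    and \<delta>: "\<And>t. t \<in> {0..1} \<Longrightarrow> \<bar>x t - y t\<bar> \<le> \<delta>" "\<delta> \<le> 1"
  shows "\<bar>integral {0..1} (\<lambda>t. rhs_slope t (x t) (y t)) - integral {0..1} (\<lambda>t. rhs_slope t (y t) (y t))\<bar>
    \<le> \<delta> * (coeff_norm * (3 * R + 2))"
proof -
  have cont: "continuous_on {0..1} (\<lambda>t. rhs_slope t (x t) (y t) - rhs_slope t (y t) (y t))"
    unfolding rhs_slope_def using x y by (intro continuous_intros)
  have "integral {0..1} (\<lambda>t. rhs_slope t (x t) (y t)) - integral {0..1} (\<lambda>t. rhs_slope t (y t) (y t))
      = integral {0..1} (\<lambda>t. rhs_slope t (x t) (y t) - rhs_slope t (y t) (y t))"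
    unfolding rhs_slope_def using x y
    by (intro integral_diff[symmetric] integrable_continuous_interval continuous_intros)
  also have "\<bar>\<dots>\<bar> \<le> \<delta> * (coeff_norm * (3 * R + 2))"
  proof (rule abs_integral_unit_interval_le[OF cont])
    fix t :: real assume t: "t \<in> {0..1}"
    have eq: "rhs_slope t (x t) (y t) - rhs_slope t (y t) (y t) = (x t - y t) * (A t * (x t + 2 * y t) + B t)"
      by (simp add: rhs_slope_def algebra_simps power2_eq_square)
    have "\<bar>x t + 2 * y t\<bar> \<le> 3 * R + 1" using \<delta>(1)[OF t] \<delta>(2) R[OF t] by linarith
    then have "\<bar>A t * (x t + 2 * y t)\<bar> \<le> coeff_norm * (3 * R + 1)"
      unfolding abs_mult using abs_coeffs_le_coeff_norm(1) coeff_norm_nonneg by (intro mult_mono) auto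
    then have "\<bar>A t * (x t + 2 * y t) + B t\<bar> \<le> coeff_norm * (3 * R + 2)"
      using abs_coeffs_le_coeff_norm(2)[of t] by (simp add: algebra_simps)
    then show "\<bar>rhs_slope t (x t) (y t) - rhs_slope t (y t) (y t)\<bar> \<le> \<delta> * (coeff_norm * (3 * R + 2))"
      unfolding eq abs_mult using \<delta>(1)[OF t] by (intro mult_mono) auto
  qed
  finally show ?thesis .
qed

lemma has_derivative_poincare:
  assumes xs: "solution xs"
  shows "(poincare has_real_derivative exp (multiplier_exponent xs)) (at (xs 0))"
proof -
  obtain R where R: "\<And>t. t \<in> {0..1} \<Longrightarrow> \<bar>xs t\<bar> \<le> R"
    using continuous_on_compact_bound[OF compact_Icc solution_continuous[OF xs]] by auto
  define L where "L = 3 * coeff_norm * (R + 1)\<^sup>2 + 2 * coeff_norm * (R + 1)"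
  define X where "X \<xi> = (SOME x. solution x \<and> x 0 = \<xi> \<and> (\<forall>t\<in>{0..1}. \<bar>x t - xs t\<bar> \<le> exp L * \<bar>\<xi> - xs 0\<bar>))" for \<xi>
  define I where "I \<xi> = integral {0..1} (\<lambda>t. rhs_slope t (X \<xi> t) (xs t))" for \<xi>
  have near: "\<forall>\<^sub>F \<xi> in at (xs 0). \<bar>\<xi> - xs 0\<bar> < exp (- L)"
    unfolding eventually_at by (auto simp: dist_real_def intro!: exI[of _ "exp (- L)"])
  have X: "solution (X \<xi>) \<and> X \<xi> 0 = \<xi> \<and> (\<forall>t\<in>{0..1}. \<bar>X \<xi> t - xs t\<bar> \<le> exp L * \<bar>\<xi> - xs 0\<bar>)"
    if \<xi>_near: "\<bar>\<xi> - xs 0\<bar> < exp (- L)" for \<xi>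
  proof -
    have L: "3 * coeff_norm * (R + 1)\<^sup>2 + 2 * coeff_norm * (R + 1) \<le> L" by (simp add: L_def)
    obtain x where "solution x" "x 0 = \<xi>" "\<And>t. t \<in> {0..1} \<Longrightarrow> \<bar>x t - xs t\<bar> \<le> exp L * \<bar>\<xi> - xs 0\<bar>"
      using solution_near[OF xs R L \<xi>_near] by blast
    then have "\<exists>x. solution x \<and> x 0 = \<xi> \<and> (\<forall>t\<in>{0..1}. \<bar>x t - xs t\<bar> \<le> exp L * \<bar>\<xi> - xs 0\<bar>)"
      by blast
    then show ?thesis unfolding X_def by (rule someI_ex)
  qed
  show ?thesis
  proof (rule has_real_derivative_if_difference_quotient_exp)
    show "\<forall>\<^sub>F \<xi> in at (xs 0). poincare \<xi> - poincare (xs 0) = (\<xi> - xs 0) * exp (I \<xi>)"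
      using near
    proof eventually_elim
      case (elim \<xi>)
      then have "solution (X \<xi>)" "X \<xi> 0 = \<xi>" using X by auto
      then show ?case
        using solution_difference[OF _ xs, of "X \<xi>" 1] poincare_solution poincare_solution[OF xs]
        by (force simp: I_def)
    qed
    have "\<forall>\<^sub>F \<xi> in at (xs 0). norm (I \<xi> - multiplier_exponent xs) \<le> \<bar>\<xi> - xs 0\<bar> * (exp L * (coeff_norm * (3 * R + 2)))"
      using near
    proof eventually_elim
      case (elim \<xi>)
      have "exp L * \<bar>\<xi> - xs 0\<bar> \<le> 1"
        using elim by (simp add: exp_minus field_simps)
      then have "\<bar>I \<xi> - multiplier_exponent xs\<bar> \<le> exp L * \<bar>\<xi> - xs 0\<bar> * (coeff_norm * (3 * R + 2))"
        unfolding I_def multiplier_exponent_def rhs_slope_diag[symmetric]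
        using X[OF elim] solution_continuous[OF xs] solution_continuous R
        by (intro abs_integral_rhs_slope_diff_le) auto
      then show ?case by (simp add: mult_ac)
    qed
    moreover have "((\<lambda>\<xi>. \<bar>\<xi> - xs 0\<bar> * (exp L * (coeff_norm * (3 * R + 2)))) \<longlongrightarrow> 0) (at (xs 0))"
      by (auto intro!: tendsto_eq_intros)
    ultimately have "((\<lambda>\<xi>. I \<xi> - multiplier_exponent xs) \<longlongrightarrow> 0) (at (xs 0))"
      by (rule Lim_null_comparison)
    then show "(I \<longlongrightarrow> multiplier_exponent xs) (at (xs 0))"
      by (simp add: LIM_zero_iff)
  qed
qed

lemma hyperbolic_if_multiplier_exponent_nonzero:
  "solution x \<Longrightarrow> multiplier_exponent x \<noteq> 0 \<Longrightarrow> hyperbolic (x 0)"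
  unfolding abel_hyperbolic_def by (metis has_derivative_poincare exp_eq_one_iff)

lemma small_solution:
  assumes K: "coeff_norm \<le> K" and \<xi>: "\<bar>\<xi>\<bar> < exp (- 5 * K)"
  obtains x where "solution x" "x 0 = \<xi>"
    "\<And>t. t \<in> {0..1} \<Longrightarrow> \<bar>x t\<bar> \<le> exp (5 * K) * \<bar>\<xi>\<bar>"
    "\<And>t. t \<in> {0..1} \<Longrightarrow> \<bar>x t - \<xi>\<bar> \<le> 2 * K * exp (15 * K) * \<xi>\<^sup>2"
proof -
  obtain x where x: "solution x" "x 0 = \<xi>" and small: "\<And>t. t \<in> {0..1} \<Longrightarrow> \<bar>x t\<bar> \<le> exp (5 * K) * \<bar>\<xi>\<bar>"
    using solution_near[OF solution_zero, of 0 "5 * K" \<xi>] K \<xi> by auto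
  define C where "C = exp (5 * K)"
  have "0 \<le> K" using K coeff_norm_nonneg by linarith
  then have C: "1 \<le> C" by (simp add: C_def)
  have "\<bar>\<xi>\<bar> \<le> 1" using \<xi> \<open>0 \<le> K\<close> by (smt (verit) exp_le_one_iff)
  have "\<bar>rhs s (x s)\<bar> \<le> 2 * K * C ^ 3 * \<xi>\<^sup>2" if s: "s \<in> {0..1}" for s
  proof -
    have xs: "\<bar>x s\<bar> \<le> C * \<bar>\<xi>\<bar>" using small[OF s] by (simp add: C_def)
    have "\<bar>x s\<bar> ^ 3 \<le> (C * \<bar>\<xi>\<bar>) ^ 3" "\<bar>x s\<bar> ^ 2 \<le> (C * \<bar>\<xi>\<bar>) ^ 2"
      by (rule power_mono[OF xs abs_ge_zero])+
    moreover have "(C * \<bar>\<xi>\<bar>) ^ 3 \<le> C ^ 3 * \<xi>\<^sup>2"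
    proof -
      have "\<bar>\<xi>\<bar> * \<xi>\<^sup>2 \<le> \<xi>\<^sup>2" using \<open>\<bar>\<xi>\<bar> \<le> 1\<close> by (simp add: mult_left_le_one_le)
      then show ?thesis using C by (simp add: power_mult_distrib power3_eq_cube power2_eq_square mult_left_mono)
    qed
    moreover have "(C * \<bar>\<xi>\<bar>) ^ 2 \<le> C ^ 3 * \<xi>\<^sup>2"
      using power_increasing[of 2 3 C] C by (simp add: power_mult_distrib mult_right_mono)
    ultimately have x3: "\<bar>x s\<bar> ^ 3 \<le> C ^ 3 * \<xi>\<^sup>2" and x2: "\<bar>x s\<bar> ^ 2 \<le> C ^ 3 * \<xi>\<^sup>2"
      by linarith+
    have "\<bar>rhs s (x s)\<bar> \<le> \<bar>A s\<bar> * \<bar>x s\<bar> ^ 3 + \<bar>B s\<bar> * \<bar>x s\<bar> ^ 2"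
      unfolding rhs_eq by (metis abs_mult abs_triangle_ineq power_abs)
    also have "\<dots> \<le> K * (C ^ 3 * \<xi>\<^sup>2) + K * (C ^ 3 * \<xi>\<^sup>2)"
      using abs_coeffs_le_coeff_norm[of s] K \<open>0 \<le> K\<close> x3 x2
      by (intro add_mono mult_mono) auto
    finally show ?thesis by simp
  qed
  then have "\<bar>x t - x 0\<bar> \<le> 2 * K * C ^ 3 * \<xi>\<^sup>2 * \<bar>t - 0\<bar>" if "t \<in> {0..1}" for t
    using that by (intro DERIV_bound_Icc[OF solution_has_derivative[OF x(1)]]) auto
  moreover have "C ^ 3 = exp (15 * K)" by (simp add: C_def exp_of_nat_mult[symmetric])
  ultimately show ?thesis
    using that[OF x small] \<open>0 \<le> K\<close> by (smt (verit) x(2) atLeastAtMost_iff mult_left_le zero_le_power2 mult_nonneg_nonneg exp_ge_zero)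
qed

end

lemma integral_mult_fixed_sign_nonzero:
  fixes D k :: "real \<Rightarrow> real"
  assumes D: "continuous_on {0..1} D" "\<And>t. t \<in> {0..1} \<Longrightarrow> 0 \<le> D t" "t1 \<in> {0..1}" "0 < D t1"
    and k: "continuous_on {0..1} k" "\<And>t. t \<in> {0..1} \<Longrightarrow> k t \<noteq> 0"
  shows "integral {0..1} (\<lambda>t. D t * k t) \<noteq> 0"
  using continuous_nonvanishing_fixed_sign[OF k]
proof
  assume "\<forall>t\<in>{0..1}. 0 < k t"
  then have "0 < integral {0..1} (\<lambda>t. D t * k t)"
    using D k by (intro integral_pos_if_pos_somewhere[of 0 1 _ t1] continuous_intros)
      (auto simp: less_imp_le)
  then show ?thesis by simp
next
  assume "\<forall>t\<in>{0..1}. k t < 0"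
  then have "0 < integral {0..1} (\<lambda>t. - (D t * k t))"
    using D k by (intro integral_pos_if_pos_somewhere[of 0 1 _ t1] continuous_intros)
      (auto simp: mult_nonneg_nonpos mult_pos_neg less_imp_le)
  then show ?thesis by (simp add: integral_neg)
qed

lemma trig_poly_fixed_sign:
  assumes "q\<^sup>2 + r\<^sup>2 \<le> p\<^sup>2"
  shows "(\<forall>t. 0 \<le> trig_poly p q r t) \<or> (\<forall>t. 0 \<le> - trig_poly p q r t)"
proof (cases "0 \<le> p")
  case True
  then show ?thesis using trig_poly_nonneg[OF assms] by blast
next
  case False
  have "0 \<le> trig_poly (- p) (- q) (- r) t" for t
    using False assms by (intro trig_poly_nonneg) simp_all
  then show ?thesis by (simp add: trig_poly_def)
qed

lemma nonneg_trig_combination_exists: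
  assumes "a1\<^sup>2 + a2\<^sup>2 \<le> a0\<^sup>2 \<or> b1\<^sup>2 + b2\<^sup>2 \<le> b0\<^sup>2 \<or>
    (a2 * b1 - a1 * b2)\<^sup>2 \<le> (a2 * b0 - a0 * b2)\<^sup>2 + (a0 * b1 - a1 * b0)\<^sup>2"
  obtains a b where "a \<noteq> 0 \<or> b \<noteq> 0" "\<And>t. 0 \<le> a * trig_poly a0 a1 a2 t + b * trig_poly b0 b1 b2 t"
proof -
  define Q where "Q a b = (a * a0 + b * b0)\<^sup>2 - (a * a1 + b * b1)\<^sup>2 - (a * a2 + b * b2)\<^sup>2" for a b
  have "\<exists>a b. (a \<noteq> 0 \<or> b \<noteq> 0) \<and> 0 \<le> Q a b"
  proof (cases "a1\<^sup>2 + a2\<^sup>2 \<le> a0\<^sup>2 \<or> b1\<^sup>2 + b2\<^sup>2 \<le> b0\<^sup>2")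
    case True
    then have "0 \<le> Q 1 0 \<or> 0 \<le> Q 0 1" by (auto simp: Q_def)
    then show ?thesis by (metis zero_neq_one)
  next
    case False
    \<comment> \<open>Q is a binary quadratic form whose discriminant is the third condition;
        since Q 1 0 < 0, its maximum over the line b = 1 is nonnegative.\<close>
    define Q11 Q12 Q22 where "Q11 = Q 1 0" and "Q12 = a0 * b0 - a1 * b1 - a2 * b2" and "Q22 = Q 0 1"
    have Q11: "Q11 < 0" using False by (simp add: Q11_def Q_def)
    have disc: "0 \<le> Q12\<^sup>2 - Q11 * Q22"
      using False assms by (simp add: Q11_def Q12_def Q22_def Q_def power2_eq_square algebra_simps)
    have "Q a 1 = Q11 * a\<^sup>2 + 2 * Q12 * a + Q22" for a
      by (simp add: Q_def Q11_def Q12_def Q22_def power2_eq_square algebra_simps)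
    then have "Q (- Q12 / Q11) 1 = (Q12\<^sup>2 - Q11 * Q22) / (- Q11)"
      using Q11 by (simp add: field_simps power2_eq_square)
    also have "\<dots> \<ge> 0" using Q11 disc by (intro divide_nonneg_pos) auto
    finally show ?thesis by (intro exI[of _ "- Q12 / Q11"] exI[of _ 1]) simp
  qed
  then obtain a b where ab: "a \<noteq> 0 \<or> b \<noteq> 0" "0 \<le> Q a b" by blast
  then have "(a * a1 + b * b1)\<^sup>2 + (a * a2 + b * b2)\<^sup>2 \<le> (a * a0 + b * b0)\<^sup>2" by (simp add: Q_def)
  from trig_poly_fixed_sign[OF this] show ?thesis
  proof
    assume "\<forall>t. 0 \<le> trig_poly (a * a0 + b * b0) (a * a1 + b * b1) (a * a2 + b * b2) t"
    then show ?thesis using that[of a b] ab(1) by (simp add: trig_poly_lincomb)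
  next
    assume "\<forall>t. 0 \<le> - trig_poly (a * a0 + b * b0) (a * a1 + b * b1) (a * a2 + b * b2) t"
    then show ?thesis using that[of "- a" "- b"] ab(1) by (simp add: trig_poly_def algebra_simps)
  qed
qed

lemma increasing_loop_with_root_has_zero_derivative:
  fixes W :: "real \<Rightarrow> real"
  assumes W': "\<And>t. t \<in> {0..1} \<Longrightarrow> (W has_real_derivative W' t) (at t within {0..1})"
    and nonneg: "\<And>t. t \<in> {0..1} \<Longrightarrow> 0 \<le> W' t"
    and root: "t0 \<in> {0..1}" "W t0 = 0" and loop: "W 1 = c * W 0" "0 < c"
    and t: "t \<in> {0<..<1}"
  shows "W' t = 0"
proof -
  have mono: "W s \<le> W u" if "0 \<le> s" "s \<le> u" "u \<le> 1" for s u
    using that by (intro DERIV_nonneg_imp_increasing_Icc[OF W' nonneg]) auto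
  have "W 0 \<le> 0" "0 \<le> W 1" using mono[of 0 t0] mono[of t0 1] root by auto
  then have "W 0 = 0" using loop by (simp add: zero_le_mult_iff)
  then have W0: "W s = 0" if "s \<in> {0..1}" for s
    using mono[of 0 s] mono[of s 1] that loop by auto
  have "(W has_real_derivative 0) (at t)"
    by (rule has_field_derivative_transform_within_open[of "\<lambda>_. 0" 0 t "{0<..<1}"])
      (use t W0 in auto)
  moreover have "(W has_real_derivative W' t) (at t)"
    using W'[of t] at_within_Icc_at[of 0 t 1] t by auto
  ultimately show ?thesis by (simp add: DERIV_unique)
qed

context abel_equation
begin

abbreviation "nonzero_periodic_orbit x \<equiv> periodic_orbit x \<and> nonzero_orbit x"

lemma nonzero_periodic_orbitD:
  assumes "nonzero_periodic_orbit x"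
  shows "solution x" "x 0 = x 1" "\<And>t. t \<in> {0..1} \<Longrightarrow> x t \<noteq> 0"
  using assms nonzero_solution_never_zero by (auto simp: abel_periodic_orbit_def)

lemma periodic_orbit_integral_zero:
  assumes x: "solution x" "x 0 = x 1" and h: "continuous_on (x ` {0..1}) h"
    and g: "\<And>t. t \<in> {0..1} \<Longrightarrow> g t = h (x t) * rhs t (x t)"
  shows "(g has_integral 0) {0..1}"
  by (rule has_integral_cong[THEN iffD2, OF g
      closed_loop_integral_zero[OF solution_has_derivative[OF x(1)] x(2) h]])

lemma nonzero_periodic_orbit_integrals:
  assumes "nonzero_periodic_orbit x"
  shows "((\<lambda>t. A t * (x t)\<^sup>2 + B t * x t) has_integral 0) {0..1}"
    and "((\<lambda>t. A t * x t + B t) has_integral 0) {0..1}"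
    and "((\<lambda>t. A t + B t / x t) has_integral 0) {0..1}"
proof -
  note x = nonzero_periodic_orbitD[OF assms]
  have cont: "continuous_on (x ` {0..1}) (\<lambda>u. 1 / u ^ k)" for k
    using x(3) by (intro continuous_intros) auto
  show "((\<lambda>t. A t * (x t)\<^sup>2 + B t * x t) has_integral 0) {0..1}"
    using x(3) by (intro periodic_orbit_integral_zero[OF x(1,2) cont[of 1]])
      (simp add: rhs_eq field_simps power2_eq_square power3_eq_cube)
  show "((\<lambda>t. A t * x t + B t) has_integral 0) {0..1}"
    using x(3) by (intro periodic_orbit_integral_zero[OF x(1,2) cont[of 2]])
      (simp add: rhs_eq field_simps power2_eq_square power3_eq_cube)
  show "((\<lambda>t. A t + B t / x t) has_integral 0) {0..1}"
    using x(3) by (intro periodic_orbit_integral_zero[OF x(1,2) cont[of 3]])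
      (simp add: rhs_eq field_simps power2_eq_square power3_eq_cube)
qed

end

context abel_equation
begin

lemma nonzero_periodic_orbit_integral_line:
  assumes x: "nonzero_periodic_orbit x" and avoid: "\<And>t. t \<in> {0..1} \<Longrightarrow> b * x t \<noteq> a"
  shows "((\<lambda>t. (A t * x t + B t) / (b * x t - a)) has_integral 0) {0..1}"
proof -
  note x = nonzero_periodic_orbitD[OF x]
  have cont: "continuous_on (x ` {0..1}) (\<lambda>u. 1 / (u\<^sup>2 * (b * u - a)))"
    using x(3) avoid by (intro continuous_intros) auto
  show ?thesis
    using x(3) avoid by (intro periodic_orbit_integral_zero[OF x(1,2) cont])
      (simp add: rhs_eq field_simps power2_eq_square power3_eq_cube)
qed

lemma multiplier_exponent_eq:
  assumes x: "nonzero_periodic_orbit x" and avoid: "\<And>t. t \<in> {0..1} \<Longrightarrow> b * x t \<noteq> a"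
  shows "multiplier_exponent x = integral {0..1} (\<lambda>t. (a * A t + b * B t) * (x t)\<^sup>2 / (a - b * x t))"
proof -
  note xD = nonzero_periodic_orbitD[OF x]
  define g where "g t = (a * A t + b * B t) * (x t)\<^sup>2 / (a - b * x t)" for t
  define h where "h u = - b / (a - b * u)" for u
  have "continuous_on {0..1} g"
    unfolding g_def using avoid solution_continuous[OF xD(1)] by (intro continuous_intros) force+
  then have "(g has_integral integral {0..1} g) {0..1}"
    by (intro integrable_integral integrable_continuous_interval)
  moreover have "((\<lambda>t. h (x t) * rhs t (x t)) has_integral 0) {0..1}"
  proof (rule periodic_orbit_integral_zero[OF xD(1,2)])
    show "continuous_on (x ` {0..1}) h"
      unfolding h_def using avoid by (intro continuous_intros) force
  qed simp
  ultimately have "((\<lambda>t. 2 * (A t * (x t)\<^sup>2 + B t * x t) + g t + h (x t) * rhs t (x t))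
      has_integral 2 * 0 + integral {0..1} g + 0) {0..1}"
    using nonzero_periodic_orbit_integrals(1)[OF x] by (intro has_integral_add has_integral_mult_right)
  moreover have "2 * (A t * (x t)\<^sup>2 + B t * x t) + g t + h (x t) * rhs t (x t) = 3 * A t * (x t)\<^sup>2 + 2 * B t * x t"
    if "t \<in> {0..1}" for t
  proof -
    have d: "a - b * x t \<noteq> 0" using avoid[OF that] by simp
    have "g t + h (x t) * rhs t (x t) = ((a * A t + b * B t) * (x t)\<^sup>2 - b * rhs t (x t)) / (a - b * x t)"
      by (simp add: g_def h_def diff_divide_distrib)
    also have "\<dots> = A t * (x t)\<^sup>2 * (a - b * x t) / (a - b * x t)"
      by (simp add: rhs_eq algebra_simps power2_eq_square power3_eq_cube)
    also have "\<dots> = A t * (x t)\<^sup>2" using d by simp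
    finally show ?thesis by (simp add: algebra_simps)
  qed
  ultimately have "((\<lambda>t. 3 * A t * (x t)\<^sup>2 + 2 * B t * x t) has_integral 2 * 0 + integral {0..1} g + 0) {0..1}"
    by (rule has_integral_cong[THEN iffD1, rotated])
  then show ?thesis
    unfolding multiplier_exponent_def g_def[symmetric] by (simp add: integral_unique)
qed

text \<open>The function (b x - a) exp (- integral of A x^2) is nondecreasing along the orbit and
  takes proportional values at both ends, so if it vanishes somewhere it vanishes identically.\<close>

lemma nonzero_periodic_orbit_touching_line:
  assumes x: "nonzero_periodic_orbit x" and b: "b \<noteq> 0"
    and nonneg: "\<And>t. t \<in> {0..1} \<Longrightarrow> 0 \<le> a * A t + b * B t"
    and touch: "t0 \<in> {0..1}" "b * x t0 = a" and t: "t \<in> {0<..<1}"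
  shows "a * A t + b * B t = 0"
proof -
  note xD = nonzero_periodic_orbitD[OF x]
  define \<Gamma> where "\<Gamma> s = integral {0..s} (\<lambda>s. A s * (x s)\<^sup>2)" for s
  define W where "W s = (b * x s - a) * exp (- \<Gamma> s)" for s
  define W' where "W' s = exp (- \<Gamma> s) * (x s)\<^sup>2 * (a * A s + b * B s)" for s
  have "continuous_on {0..1} (\<lambda>s. A s * (x s)\<^sup>2)"
    using solution_continuous[OF xD(1)] by (intro continuous_intros)
  then have \<Gamma>': "(\<Gamma> has_real_derivative A s * (x s)\<^sup>2) (at s within {0..1})" if "s \<in> {0..1}" for s
    unfolding \<Gamma>_def by (rule integral_has_real_derivative[OF _ that])
  have "(W has_real_derivative W' s) (at s within {0..1})" if s: "s \<in> {0..1}" for s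
    unfolding W_def W'_def
    by (rule derivative_eq_intros solution_has_derivative[OF xD(1) s] \<Gamma>'[OF s] refl
        | simp add: rhs_eq algebra_simps power2_eq_square power3_eq_cube)+
  moreover have "W 1 = exp (- \<Gamma> 1) * W 0" by (simp add: W_def \<Gamma>_def xD(2))
  ultimately have "W' t = 0"
    using nonneg touch t by (intro increasing_loop_with_root_has_zero_derivative[of W W' t0])
      (auto simp: W'_def W_def)
  then show ?thesis using xD(3)[of t] t by (simp add: W'_def)
qed

lemma no_nonzero_periodic_orbit_if_A_zero:
  assumes "a0 = 0" "a1 = 0" "a2 = 0" "b0 \<noteq> 0"
  shows "\<not> nonzero_periodic_orbit x"
proof
  assume "nonzero_periodic_orbit x"
  from nonzero_periodic_orbit_integrals(2)[OF this] have "(B has_integral 0) {0..1}"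
    using assms by (simp add: trig_poly_def[abs_def])
  then show False
    using has_integral_unique[OF _ has_integral_trig_poly] assms(4) by blast
qed

lemma nonzero_periodic_orbit_eq_if_B_proportional:
  assumes B: "\<And>t. B t = - c * A t" and "a0 \<noteq> 0"
    and x: "nonzero_periodic_orbit x" and t: "t \<in> {0..1}"
  shows "x t = c"
proof -
  note xD = nonzero_periodic_orbitD[OF x]
  have const: "solution (\<lambda>t. c)"
    by (simp add: abel_solution_def rhs_eq B power2_eq_square power3_eq_cube)
  have "\<exists>t0\<in>{0..1}. x t0 = c"
  proof (rule ccontr)
    assume "\<not> ?thesis"
    then have avoid: "\<And>t. t \<in> {0..1} \<Longrightarrow> 1 * x t \<noteq> c" by auto
    have "((\<lambda>t. (A t * x t + B t) / (1 * x t - c)) has_integral 0) {0..1}"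
      by (rule nonzero_periodic_orbit_integral_line[OF x avoid])
    moreover have "(A t * x t + B t) / (1 * x t - c) = A t" if "t \<in> {0..1}" for t
      using avoid[OF that] by (simp add: B field_simps)
    ultimately have "(A has_integral 0) {0..1}" by (rule has_integral_cong[THEN iffD1, rotated])
    then show False using has_integral_unique[OF _ has_integral_trig_poly] \<open>a0 \<noteq> 0\<close> by blast
  qed
  then show ?thesis using solution_unique[OF xD(1) const _ _ t] by auto
qed

lemma hyperbolic_if_B_proportional:
  assumes B: "\<And>t. B t = - c * A t" and "a0 \<noteq> 0" and x: "nonzero_periodic_orbit x"
  shows "hyperbolic (x 0)"
proof -
  have xc: "x t = c" if "t \<in> {0..1}" for t
    using nonzero_periodic_orbit_eq_if_B_proportional[OF B \<open>a0 \<noteq> 0\<close> x that] .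
  then have "c \<noteq> 0" using nonzero_periodic_orbitD(3)[OF x, of 0] by auto
  have "multiplier_exponent x = integral {0..1} (\<lambda>t. c\<^sup>2 * A t)"
    unfolding multiplier_exponent_def
    by (rule integral_cong) (simp add: xc B power2_eq_square algebra_simps)
  also have "\<dots> = c\<^sup>2 * a0"
    by (rule integral_unique[OF has_integral_mult_right[OF has_integral_trig_poly]])
  finally show ?thesis
    using hyperbolic_if_multiplier_exponent_nonzero[OF nonzero_periodic_orbitD(1)[OF x]]
      \<open>c \<noteq> 0\<close> \<open>a0 \<noteq> 0\<close> by simp
qed

context
  fixes a b t1 :: real
  assumes ab: "a \<noteq> 0 \<or> b \<noteq> 0"
    and nonneg: "\<And>t. t \<in> {0..1} \<Longrightarrow> 0 \<le> a * A t + b * B t"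
    and pos: "t1 \<in> {0<..<1}" "0 < a * A t1 + b * B t1"
begin

lemma nonzero_periodic_orbit_avoids_line:
  assumes x: "nonzero_periodic_orbit x" and t: "t \<in> {0..1}"
  shows "b * x t \<noteq> a"
proof
  assume touch: "b * x t = a"
  then have "b \<noteq> 0" using ab by auto
  from nonzero_periodic_orbit_touching_line[OF x this nonneg t touch pos(1)] pos(2) show False
    by simp
qed

lemma hyperbolic_if_nonneg_combination:
  assumes x: "nonzero_periodic_orbit x"
  shows "hyperbolic (x 0)"
proof -
  note xD = nonzero_periodic_orbitD[OF x]
  note avoid = nonzero_periodic_orbit_avoids_line[OF x]
  have "integral {0..1} (\<lambda>t. (a * A t + b * B t) * ((x t)\<^sup>2 / (a - b * x t))) \<noteq> 0"
  proof (rule integral_mult_fixed_sign_nonzero[where D="\<lambda>t. a * A t + b * B t", OF _ nonneg _ pos(2)])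
    have "a - b * x t \<noteq> 0" if "t \<in> {0..1}" for t using avoid[OF that] by simp
    then show "continuous_on {0..1} (\<lambda>t. (x t)\<^sup>2 / (a - b * x t))"
      using solution_continuous[OF xD(1)] by (intro continuous_intros) auto
    show "(x t)\<^sup>2 / (a - b * x t) \<noteq> 0" if "t \<in> {0..1}" for t
      using xD(3)[OF that] avoid[OF that] by simp
  qed (use pos(1) in \<open>auto intro!: continuous_intros\<close>)
  then have "multiplier_exponent x \<noteq> 0"
    using multiplier_exponent_eq[OF x avoid] by simp
  then show ?thesis by (rule hyperbolic_if_multiplier_exponent_nonzero[OF xD(1)])
qed

lemma nonzero_periodic_orbits_eq_if_nonneg_combination:
  assumes x: "nonzero_periodic_orbit x" and y: "nonzero_periodic_orbit y" and t: "t \<in> {0..1}"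
  shows "x t = y t"
proof (rule ccontr)
  assume "x t \<noteq> y t"
  note xD = nonzero_periodic_orbitD[OF x] and yD = nonzero_periodic_orbitD[OF y]
  note avoid_x = nonzero_periodic_orbit_avoids_line[OF x]
    and avoid_y = nonzero_periodic_orbit_avoids_line[OF y]
  have ne: "x s \<noteq> y s" if "s \<in> {0..1}" for s
    using solution_unique[OF xD(1) yD(1) that _ t] \<open>x t \<noteq> y t\<close> by auto
  define k where "k s = (x s - y s) / ((b * x s - a) * (b * y s - a))" for s
  have integral: "((\<lambda>s. (A s * x s + B s) / (b * x s - a) - (A s * y s + B s) / (b * y s - a))
      has_integral 0 - 0) {0..1}"
    by (intro has_integral_diff nonzero_periodic_orbit_integral_line x y avoid_x avoid_y)
  have eq: "(A s * x s + B s) / (b * x s - a) - (A s * y s + B s) / (b * y s - a)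
      = - ((a * A s + b * B s) * k s)" if "s \<in> {0..1}" for s
  proof -
    have "b * x s - a \<noteq> 0" "b * y s - a \<noteq> 0" using avoid_x[OF that] avoid_y[OF that] by auto
    then have "(A s * x s + B s) / (b * x s - a) - (A s * y s + B s) / (b * y s - a)
        = ((A s * x s + B s) * (b * y s - a) - (A s * y s + B s) * (b * x s - a)) / ((b * x s - a) * (b * y s - a))"
      by (rule diff_frac_eq)
    also have "\<dots> = - ((a * A s + b * B s) * (x s - y s)) / ((b * x s - a) * (b * y s - a))"
      by (simp add: algebra_simps)
    finally show ?thesis by (simp add: k_def)
  qed
  have "((\<lambda>s. - ((a * A s + b * B s) * k s)) has_integral 0) {0..1}"
    by (rule has_integral_cong[THEN iffD1, OF eq integral[unfolded diff_self]])
  then have "integral {0..1} (\<lambda>s. (a * A s + b * B s) * k s) = 0"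
    using has_integral_neg by (fastforce dest: integral_unique)
  moreover have "integral {0..1} (\<lambda>s. (a * A s + b * B s) * k s) \<noteq> 0"
  proof (rule integral_mult_fixed_sign_nonzero[where D="\<lambda>t. a * A t + b * B t", OF _ nonneg _ pos(2)])
    have "(b * x s - a) * (b * y s - a) \<noteq> 0" if "s \<in> {0..1}" for s
      using avoid_x[OF that] avoid_y[OF that] by simp
    then show "continuous_on {0..1} k"
      unfolding k_def using solution_continuous[OF xD(1)] solution_continuous[OF yD(1)]
      by (intro continuous_intros) auto
    show "k s \<noteq> 0" if "s \<in> {0..1}" for s
      using ne[OF that] avoid_x[OF that] avoid_y[OF that] by (simp add: k_def)
  qed (use pos(1) in \<open>auto intro!: continuous_intros\<close>)
  ultimately show False by simp
qed

end

lemma nonzero_periodic_orbits_if_degenerate_combination: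
  assumes nc: "\<not> (a0 = 0 \<and> b0 = 0 \<and> a2 * b1 - a1 * b2 = 0)"
    and ab: "a \<noteq> 0 \<or> b \<noteq> 0" and zero: "\<And>t. t \<in> {0<..<1} \<Longrightarrow> a * A t + b * B t = 0"
    and x: "nonzero_periodic_orbit x" and y: "nonzero_periodic_orbit y"
  shows "(\<forall>t\<in>{0..1}. x t = y t) \<and> hyperbolic (x 0)"
proof -
  have "a * a0 + b * b0 = 0 \<and> a * a1 + b * b1 = 0 \<and> a * a2 + b * b2 = 0"
    using zero by (intro trig_poly_eq_0_on_interior_imp_coeffs) (simp add: trig_poly_lincomb)
  then have co: "a * a0 + b * b0 = 0" "a * a1 + b * b1 = 0" "a * a2 + b * b2 = 0" by auto
  show ?thesis
  proof (cases "b = 0")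
    case True
    with ab co have "a0 = 0" "a1 = 0" "a2 = 0" by auto
    with nc have "b0 \<noteq> 0" by simp
    with no_nonzero_periodic_orbit_if_A_zero \<open>a0 = 0\<close> \<open>a1 = 0\<close> \<open>a2 = 0\<close> x show ?thesis by blast
  next
    case False
    define c where "c = a / b"
    have bc: "b0 = - c * a0" "b1 = - c * a1" "b2 = - c * a2"
      using co False by (simp_all add: c_def field_simps)
    have B: "B t = - c * A t" for t by (simp add: bc trig_poly_def algebra_simps)
    have "a0 \<noteq> 0" using nc by (auto simp: bc algebra_simps)
    have "x t = y t" if "t \<in> {0..1}" for t
      using nonzero_periodic_orbit_eq_if_B_proportional[OF B \<open>a0 \<noteq> 0\<close> _ that] x y by metis
    then show ?thesis using hyperbolic_if_B_proportional[OF B \<open>a0 \<noteq> 0\<close> x] by blast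
  qed
qed

theorem at_most_one_nonzero_periodic_orbit:
  assumes nc: "\<not> (a0 = 0 \<and> b0 = 0 \<and> a2 * b1 - a1 * b2 = 0)"
    and cond: "a1\<^sup>2 + a2\<^sup>2 \<le> a0\<^sup>2 \<or> b1\<^sup>2 + b2\<^sup>2 \<le> b0\<^sup>2 \<or>
      (a2 * b1 - a1 * b2)\<^sup>2 \<le> (a2 * b0 - a0 * b2)\<^sup>2 + (a0 * b1 - a1 * b0)\<^sup>2"
    and x: "nonzero_periodic_orbit x" and y: "nonzero_periodic_orbit y"
  shows "(\<forall>t\<in>{0..1}. x t = y t) \<and> hyperbolic (x 0)"
proof -
  obtain a b where ab: "a \<noteq> 0 \<or> b \<noteq> 0" and nonneg: "\<And>t. 0 \<le> a * A t + b * B t"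
    using nonneg_trig_combination_exists[OF cond] by blast
  show ?thesis
  proof (cases "\<exists>t1\<in>{0<..<1}. 0 < a * A t1 + b * B t1")
    case True
    then obtain t1 where t1: "t1 \<in> {0<..<1}" "0 < a * A t1 + b * B t1" by blast
    show ?thesis
      using nonzero_periodic_orbits_eq_if_nonneg_combination[OF ab nonneg t1 x y]
        hyperbolic_if_nonneg_combination[OF ab nonneg t1 x] by blast
  next
    case False
    have "a * A t + b * B t = 0" if "t \<in> {0<..<1}" for t
    proof -
      have "\<not> 0 < a * A t + b * B t" using False that by blast
      then show ?thesis using nonneg[of t] by linarith
    qed
    then show ?thesis by (rule nonzero_periodic_orbits_if_degenerate_combination[OF nc ab _ x y])
  qed
qed

end

lemma integral_nonzero_if_nonvanishing:
  fixes f :: "real \<Rightarrow> real"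
  assumes "a < b" and f: "continuous_on {a..b} f" "\<And>t. t \<in> {a..b} \<Longrightarrow> f t \<noteq> 0"
  shows "integral {a..b} f \<noteq> 0"
  using continuous_nonvanishing_fixed_sign[OF f]
proof
  assume "\<forall>t\<in>{a..b}. 0 < f t"
  then have "0 < integral {a..b} f"
    using assms by (intro integral_pos_if_pos_somewhere[of a b f a]) (auto simp: less_imp_le)
  then show ?thesis by simp
next
  assume "\<forall>t\<in>{a..b}. f t < 0"
  then have "0 < integral {a..b} (\<lambda>t. - f t)"
    using assms by (intro integral_pos_if_pos_somewhere[of a b _ a] continuous_intros) (auto simp: less_imp_le)
  then show ?thesis by (simp add: integral_neg)
qed

lemma separable_ode_periodic:
  fixes x C g :: "real \<Rightarrow> real"
  assumes x': "\<And>t. t \<in> {0..1} \<Longrightarrow> (x has_real_derivative C t * g (x t)) (at t within {0..1})"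
    and C: "(C has_integral 0) {0..1}"
    and g: "continuous_on (x ` {0..1}) g" "\<And>u. u \<in> x ` {0..1} \<Longrightarrow> g u \<noteq> 0"
  shows "x 1 = x 0"
proof -
  obtain m M where mM: "x ` {0..1} = {m..M}"
    using continuous_image_closed_interval[OF _ DERIV_continuous_on[OF x']] by auto
  have h: "continuous_on {m..M} (\<lambda>u. 1 / g u)" "\<And>u. u \<in> {m..M} \<Longrightarrow> 1 / g u \<noteq> 0"
    using g mM by (auto intro!: continuous_intros)
  have "((\<lambda>t. (C t * g (x t)) *\<^sub>R (1 / g (x t))) has_integral
      integral {x 0..x 1} (\<lambda>u. 1 / g u) - integral {x 1..x 0} (\<lambda>u. 1 / g u)) {0..1}"
    by (rule has_integral_substitution_general[of "{}"])
      (use mM h x' DERIV_continuous_on[OF x'] in auto)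
  moreover have "(C t * g (x t)) *\<^sub>R (1 / g (x t)) = C t" if "t \<in> {0..1}" for t
    using g(2)[of "x t"] that by simp
  ultimately have "(C has_integral integral {x 0..x 1} (\<lambda>u. 1 / g u) - integral {x 1..x 0} (\<lambda>u. 1 / g u)) {0..1}"
    by (rule has_integral_cong[THEN iffD1, rotated])
  then have eq: "integral {x 0..x 1} (\<lambda>u. 1 / g u) = integral {x 1..x 0} (\<lambda>u. 1 / g u)"
    using has_integral_unique[OF C] by fastforce
  have sub: "{x 0..x 1} \<subseteq> {m..M}" "{x 1..x 0} \<subseteq> {m..M}" using mM by auto
  show ?thesis
  proof (rule ccontr)
    assume "x 1 \<noteq> x 0"
    then consider "x 0 < x 1" | "x 1 < x 0" by linarith
    then show False
    proof cases
      case 1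
      then show False
        using eq integral_nonzero_if_nonvanishing[OF 1 continuous_on_subset[OF h(1) sub(1)]] h(2) sub(1)
        by auto
    next
      case 2
      then show False
        using eq integral_nonzero_if_nonvanishing[OF 2 continuous_on_subset[OF h(1) sub(2)]] h(2) sub(2)
        by auto
    qed
  qed
qed

lemma fundamental_theorem_of_calculus_real:
  fixes f :: "real \<Rightarrow> real"
  assumes "a \<le> b" "\<And>t. t \<in> {a..b} \<Longrightarrow> (f has_real_derivative f' t) (at t within {a..b})"
  shows "(f' has_integral f b - f a) {a..b}"
  using assms by (intro fundamental_theorem_of_calculus) (auto simp: has_real_derivative_iff_has_vector_derivative)

definition trig_primitive :: "real \<Rightarrow> real \<Rightarrow> real \<Rightarrow> real" where
  "trig_primitive q r t = (1 / (2 * pi)) * (q * sin (2 * pi * t) + r - r * cos (2 * pi * t))"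

lemma trig_primitive_has_derivative:
  "(trig_primitive q r has_real_derivative trig_poly 0 q r t) (at t within S)"
proof -
  have "(trig_primitive q r has_real_derivative
      (1 / (2 * pi)) * (q * (cos (2 * pi * t) * (2 * pi)) - r * (- sin (2 * pi * t) * (2 * pi)))) (at t within S)"
    unfolding trig_primitive_def by (rule derivative_eq_intros refl | simp)+
  moreover have "(1 / (2 * pi)) * (q * (cos (2 * pi * t) * (2 * pi)) - r * (- sin (2 * pi * t) * (2 * pi)))
      = trig_poly 0 q r t"
    by (simp add: trig_poly_def field_simps)
  ultimately show ?thesis by simp
qed

lemma trig_primitive_0_1: "trig_primitive q r 0 = 0" "trig_primitive q r 1 = 0"
  by (simp_all add: trig_primitive_def)

lemma continuous_on_trig_primitive [continuous_intros]: "continuous_on S (trig_primitive q r)"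
  unfolding trig_primitive_def by (intro continuous_intros)

lemma has_integral_trig_primitive_mult:
  "((\<lambda>t. trig_primitive b1 b2 t * trig_poly 0 a1 a2 t) has_integral (a2 * b1 - a1 * b2) / (4 * pi)) {0..1}"
proof -
  define s where "s t = sin (2*pi*t)" for t
  define c where "c t = cos (2*pi*t)" for t
  have sd: "(s has_real_derivative 2*pi * c t) (at t within S)" for t S
    unfolding s_def c_def by (rule derivative_eq_intros refl | simp)+
  have cd: "(c has_real_derivative - (2*pi * s t)) (at t within S)" for t S
    unfolding s_def c_def by (rule derivative_eq_intros refl | simp)+
  have cc: "c t * c t = 1 - s t * s t" for t
    using sin_cos_squared_add[of "2*pi*t"] by (simp add: s_def c_def power2_eq_square algebra_simps)
  have sc2: "pi * (c t * (c t * 2)) + pi * (s t * (s t * 2)) = pi * 2" for t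
  proof -
    have "pi * (c t * (c t * 2)) + pi * (s t * (s t * 2)) = 2 * pi * (c t * c t + s t * s t)" by (simp add: algebra_simps)
    also have "\<dots> = 2 * pi" using cc[of t] by simp
    finally show ?thesis by simp
  qed
  define P1 where "P1 t = (1/(4*pi)) * (s t * s t)" for t
  define P2 where "P2 t = t/2 - (1/(4*pi)) * (s t * c t)" for t
  define P3 where "P3 t = t/2 + (1/(4*pi)) * (s t * c t)" for t
  define P4 where "P4 t = (1/(2*pi)) * s t" for t
  define P5 where "P5 t = - (1/(2*pi)) * c t" for t
  have P1': "(P1 has_real_derivative s t * c t) (at t within S)" for t S
    unfolding P1_def by (rule derivative_eq_intros sd cd refl | simp add: field_simps)+
  have P2': "(P2 has_real_derivative s t * s t) (at t within S)" for t S
    unfolding P2_def by (rule derivative_eq_intros sd cd refl | simp add: field_simps cc sc2)+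
  have P3': "(P3 has_real_derivative c t * c t) (at t within S)" for t S
  proof -
    have cc2: "c t * (c t * 2) = 2 - s t * (s t * 2)" using cc[of t] by (simp add: algebra_simps)
    show ?thesis unfolding P3_def by (rule derivative_eq_intros sd cd refl | simp add: field_simps cc cc2 sc2)+
  qed
  have P4': "(P4 has_real_derivative c t) (at t within S)" for t S
    unfolding P4_def by (rule derivative_eq_intros sd cd refl | simp add: field_simps)+
  have P5': "(P5 has_real_derivative s t) (at t within S)" for t S
    unfolding P5_def by (rule derivative_eq_intros sd cd refl | simp add: field_simps)+
  define P where "P t = (1/(2*pi)) * (b1 * a1 * P1 t + b1 * a2 * P2 t + b2 * a1 * P4 t + b2 * a2 * P5 t - b2 * a1 * P3 t - b2 * a2 * P1 t)" for t
  have "((\<lambda>t. trig_primitive b1 b2 t * trig_poly 0 a1 a2 t) has_integral P 1 - P 0) {0..1}"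
  proof (rule fundamental_theorem_of_calculus_real)
    fix t :: real assume "t \<in> {0..1}"
    have "(P has_real_derivative (1/(2*pi)) * (b1 * a1 * (s t * c t) + b1 * a2 * (s t * s t) + b2 * a1 * c t + b2 * a2 * s t - b2 * a1 * (c t * c t) - b2 * a2 * (s t * c t))) (at t within {0..1})"
      unfolding P_def by (rule derivative_eq_intros P1' P2' P3' P4' P5' refl | simp)+
    moreover have "(1/(2*pi)) * (b1 * a1 * (s t * c t) + b1 * a2 * (s t * s t) + b2 * a1 * c t + b2 * a2 * s t - b2 * a1 * (c t * c t) - b2 * a2 * (s t * c t)) = trig_primitive b1 b2 t * trig_poly 0 a1 a2 t"
      unfolding trig_primitive_def trig_poly_def s_def[symmetric] c_def[symmetric] by (simp add: field_simps)
    ultimately show "(P has_real_derivative trig_primitive b1 b2 t * trig_poly 0 a1 a2 t) (at t within {0..1})" by simp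
  qed simp
  moreover have "P 1 - P 0 = (a2 * b1 - a1 * b2) / (4 * pi)"
  proof -
    have "s 1 = 0" "c 1 = 1" "s 0 = 0" "c 0 = 1" by (simp_all add: s_def c_def)
    then show ?thesis by (simp add: P_def P1_def P2_def P3_def P4_def P5_def field_simps)
  qed
  ultimately show ?thesis by simp
qed

context abel_equation
begin

lemma rhs_separable_if_center_conditions:
  assumes "a0 = 0" "b0 = 0" "a2 * b1 - a1 * b2 = 0"
  obtains c1 c2 :: real and g :: "real \<Rightarrow> real" and \<delta> :: real
  where "\<And>t u. rhs t u = trig_poly 0 c1 c2 t * g u" "continuous_on UNIV g" "0 < \<delta>"
    "\<And>u. u \<noteq> 0 \<Longrightarrow> \<bar>u\<bar> < \<delta> \<Longrightarrow> g u \<noteq> 0"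
proof (cases "b1 = 0 \<and> b2 = 0")
  case True
  show ?thesis
    by (rule that[of a1 a2 "\<lambda>u. u ^ 3" 1])
      (use True assms in \<open>auto simp: abel_rhs_def trig_poly_def intro!: continuous_intros\<close>)
next
  case False
  define r where "r = (if b1 \<noteq> 0 then a1 / b1 else a2 / b2)"
  have "a1 = r * b1" "a2 = r * b2"
    using False assms(3) by (auto simp: r_def field_simps)
  then have "rhs t u = trig_poly 0 b1 b2 t * (u\<^sup>2 * (r * u + 1))" for t u
    using assms by (simp add: abel_rhs_def trig_poly_def algebra_simps power2_eq_square power3_eq_cube)
  moreover have "u\<^sup>2 * (r * u + 1) \<noteq> 0" if "u \<noteq> 0" "\<bar>u\<bar> < 1 / (\<bar>r\<bar> + 1)" for u
  proof -
    have "\<bar>r * u\<bar> < 1"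
      using that mult_strict_left_mono[OF that(2), of "\<bar>r\<bar> + 1"]
      by (simp add: abs_mult field_simps)
    then show ?thesis using that(1) by auto
  qed
  ultimately show ?thesis
    by (intro that[of b1 b2 "\<lambda>u. u\<^sup>2 * (r * u + 1)" "1 / (\<bar>r\<bar> + 1)"]) (auto intro!: continuous_intros)
qed

theorem center_if_conditions:
  assumes "a0 = 0" "b0 = 0" "a2 * b1 - a1 * b2 = 0"
  shows center
proof -
  obtain c1 c2 g \<delta> where rhs: "\<And>t u. rhs t u = trig_poly 0 c1 c2 t * g u"
    and g: "continuous_on UNIV g" "0 < \<delta>" "\<And>u. u \<noteq> 0 \<Longrightarrow> \<bar>u\<bar> < \<delta> \<Longrightarrow> g u \<noteq> 0"
    using rhs_separable_if_center_conditions[OF assms] by blast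
  define K where "K = coeff_norm"
  define e where "e = min (exp (- 5 * K)) (\<delta> / exp (5 * K))"
  have "0 < e" using g(2) by (simp add: e_def)
  moreover have "\<exists>x. periodic_orbit x \<and> x 0 = \<xi>" if \<xi>: "\<bar>\<xi>\<bar> < e" for \<xi>
  proof (cases "\<xi> = 0")
    case True
    then show ?thesis using solution_zero by (auto simp: abel_periodic_orbit_def)
  next
    case False
    have "coeff_norm \<le> K" "\<bar>\<xi>\<bar> < exp (- 5 * K)" using \<xi> by (simp_all add: K_def e_def)
    then obtain x where x: "solution x" "x 0 = \<xi>"
      and small: "\<And>t. t \<in> {0..1} \<Longrightarrow> \<bar>x t\<bar> \<le> exp (5 * K) * \<bar>\<xi>\<bar>"
      by (rule small_solution) blast
    have "nonzero_orbit x" using x False by (auto simp: nonzero_orbit_def intro!: bexI[of _ 0])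
    then have nz: "x t \<noteq> 0" if "t \<in> {0..1}" for t using nonzero_solution_never_zero[OF x(1) _ that] by blast
    have "\<bar>x t\<bar> < \<delta>" if "t \<in> {0..1}" for t
    proof -
      have "exp (5 * K) * \<bar>\<xi>\<bar> < exp (5 * K) * (\<delta> / exp (5 * K))"
        using \<xi> by (intro mult_strict_left_mono) (auto simp: e_def)
      then show ?thesis using small[OF that] by simp
    qed
    then have "x 1 = x 0"
      using nz g solution_has_derivative[OF x(1)] has_integral_trig_poly[of 0 c1 c2]
      by (intro separable_ode_periodic[where C="trig_poly 0 c1 c2" and g=g])
        (auto simp: rhs intro: continuous_on_subset)
    then show ?thesis using x by (auto simp: abel_periodic_orbit_def)
  qed
  ultimately show ?thesis unfolding abel_center_def by blast
qed

lemma integral_A_mult_nonzero_periodic_orbit: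
  assumes x: "nonzero_periodic_orbit x"
  shows "((\<lambda>t. A t * x t) has_integral - b0) {0..1}"
  using has_integral_diff[OF nonzero_periodic_orbit_integrals(2)[OF x] has_integral_trig_poly[of b0 b1 b2]]
  by simp

text \<open>With b0 = 0 the coefficient B has the periodic primitive trig_primitive b1 b2 =: beta, and
  integrating (beta / x)' = B / x - beta (A x + B) and (beta^2 / 2)' = beta B over the orbit turns
  the identity for the integral of A + B / x into one for the integral of beta A x.\<close>

lemma integral_primitive_A_mult_nonzero_periodic_orbit:
  assumes "b0 = 0" and x: "nonzero_periodic_orbit x"
  shows "((\<lambda>t. trig_primitive b1 b2 t * A t * x t) has_integral - a0) {0..1}"
proof -
  note xD = nonzero_periodic_orbitD[OF x]
  let ?\<beta> = "trig_primitive b1 b2"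
  have B: "B = trig_poly 0 b1 b2" using \<open>b0 = 0\<close> by simp
  have I1: "((\<lambda>t. (A t + B t / x t) - A t) has_integral 0 - a0) {0..1}"
    by (intro has_integral_diff nonzero_periodic_orbit_integrals(3)[OF x] has_integral_trig_poly)
  have I2: "((\<lambda>t. B t / x t - ?\<beta> t * (A t * x t + B t)) has_integral ?\<beta> 1 / x 1 - ?\<beta> 0 / x 0) {0..1}"
  proof (rule fundamental_theorem_of_calculus_real)
    fix t :: real assume t: "t \<in> {0..1}"
    have "((\<lambda>t. ?\<beta> t / x t) has_real_derivative
        (trig_poly 0 b1 b2 t * x t - ?\<beta> t * rhs t (x t)) / (x t * x t)) (at t within {0..1})"
      by (rule derivative_eq_intros trig_primitive_has_derivative solution_has_derivative[OF xD(1) t] refl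
          | use xD(3)[OF t] in simp)+
    moreover have "(trig_poly 0 b1 b2 t * x t - ?\<beta> t * rhs t (x t)) / (x t * x t)
        = B t / x t - ?\<beta> t * (A t * x t + B t)"
      using xD(3)[OF t] by (simp add: B rhs_eq field_simps power2_eq_square power3_eq_cube)
    ultimately show "((\<lambda>t. ?\<beta> t / x t) has_real_derivative B t / x t - ?\<beta> t * (A t * x t + B t))
        (at t within {0..1})" by simp
  qed simp
  have I3: "((\<lambda>t. ?\<beta> t * B t) has_integral (?\<beta> 1)\<^sup>2 / 2 - (?\<beta> 0)\<^sup>2 / 2) {0..1}"
  proof (rule fundamental_theorem_of_calculus_real)
    fix t :: real
    show "((\<lambda>t. (?\<beta> t)\<^sup>2 / 2) has_real_derivative ?\<beta> t * B t) (at t within {0..1})"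
      by (rule derivative_eq_intros trig_primitive_has_derivative refl | simp add: B)+
  qed simp
  have "((\<lambda>t. ((A t + B t / x t) - A t) - (B t / x t - ?\<beta> t * (A t * x t + B t)) - ?\<beta> t * B t)
      has_integral (0 - a0) - (?\<beta> 1 / x 1 - ?\<beta> 0 / x 0) - ((?\<beta> 1)\<^sup>2 / 2 - (?\<beta> 0)\<^sup>2 / 2)) {0..1}"
    by (rule has_integral_diff[OF has_integral_diff[OF I1 I2] I3])
  then show ?thesis by (simp add: trig_primitive_0_1 algebra_simps)
qed

lemma small_periodic_orbits_if_center:
  assumes center
  obtains \<eta> where "0 < \<eta>" "\<And>\<xi>. 0 < \<xi> \<Longrightarrow> \<xi> < \<eta> \<Longrightarrow> \<exists>x. nonzero_periodic_orbit x \<and>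
    (\<forall>t\<in>{0..1}. 0 < x t \<and> x t \<le> exp (5 * coeff_norm) * \<xi> \<and>
                 \<bar>x t - \<xi>\<bar> \<le> 2 * coeff_norm * exp (15 * coeff_norm) * \<xi>\<^sup>2)"
proof -
  obtain e where "0 < e" and periodic: "\<And>\<xi>. \<bar>\<xi>\<bar> < e \<Longrightarrow> \<exists>x. periodic_orbit x \<and> x 0 = \<xi>"
    using assms unfolding abel_center_def by blast
  show ?thesis
  proof (rule that[of "min e (exp (- 5 * coeff_norm))"])
    fix \<xi> :: real assume \<xi>: "0 < \<xi>" "\<xi> < min e (exp (- 5 * coeff_norm))"
    then obtain x where x: "periodic_orbit x" "x 0 = \<xi>" using periodic by force
    obtain y where y: "solution y" "y 0 = \<xi>"
      and "\<And>t. t \<in> {0..1} \<Longrightarrow> \<bar>y t\<bar> \<le> exp (5 * coeff_norm) * \<bar>\<xi>\<bar>"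
      and "\<And>t. t \<in> {0..1} \<Longrightarrow> \<bar>y t - \<xi>\<bar> \<le> 2 * coeff_norm * exp (15 * coeff_norm) * \<xi>\<^sup>2"
      using small_solution[of coeff_norm \<xi>] \<xi> by auto
    moreover have xs: "solution x" using x by (simp add: abel_periodic_orbit_def)
    moreover have "x t = y t" if "t \<in> {0..1}" for t
      using solution_unique[OF xs y(1), of 0 t] x y that by auto
    moreover have "nonzero_orbit x" using x \<xi> by (auto simp: nonzero_orbit_def intro!: bexI[of _ 0])
    ultimately show "\<exists>x. nonzero_periodic_orbit x \<and> (\<forall>t\<in>{0..1}. 0 < x t \<and>
        x t \<le> exp (5 * coeff_norm) * \<xi> \<and> \<bar>x t - \<xi>\<bar> \<le> 2 * coeff_norm * exp (15 * coeff_norm) * \<xi>\<^sup>2)"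
      using x solution_pos[OF xs] \<xi>(1) by (intro exI[of _ x]) (auto simp: abs_le_iff)
  qed (use \<open>0 < e\<close> in simp)
qed

theorem conditions_if_center:
  assumes center
  shows "a0 = 0 \<and> b0 = 0 \<and> a2 * b1 - a1 * b2 = 0"
proof -
  define K C D where "K = coeff_norm" and "C = exp (5 * coeff_norm)"
    and "D = 2 * coeff_norm * exp (15 * coeff_norm)"
  obtain \<eta> where "0 < \<eta>" and orbit: "\<And>\<xi>. 0 < \<xi> \<Longrightarrow> \<xi> < \<eta> \<Longrightarrow> \<exists>x. nonzero_periodic_orbit x \<and>
      (\<forall>t\<in>{0..1}. 0 < x t \<and> x t \<le> C * \<xi> \<and> \<bar>x t - \<xi>\<bar> \<le> D * \<xi>\<^sup>2)"
    using small_periodic_orbits_if_center[OF assms] unfolding C_def D_def by blast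
  obtain M where M: "\<And>t. t \<in> {0..1} \<Longrightarrow> \<bar>trig_primitive b1 b2 t\<bar> \<le> M"
    using continuous_on_compact_bound[OF compact_Icc[of 0 1] continuous_on_trig_primitive[of _ b1 b2]] by auto
  have "0 \<le> K" "0 \<le> M" using coeff_norm_nonneg M[of 0] by (auto simp: K_def)
  have "\<bar>b0\<bar> \<le> K * C * \<xi>" if \<xi>: "0 < \<xi>" "\<xi> < \<eta>" for \<xi>
  proof -
    obtain x where x: "nonzero_periodic_orbit x" and bound: "\<And>t. t \<in> {0..1} \<Longrightarrow> 0 < x t \<and> x t \<le> C * \<xi>"
      using orbit[OF \<xi>] by blast
    have bound: "\<bar>x t\<bar> \<le> C * \<xi>" if "t \<in> {0..1}" for t using bound[OF that] by auto
    have "\<bar>integral {0..1} (\<lambda>t. A t * x t)\<bar> \<le> K * (C * \<xi>)"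
      using bound abs_coeffs_le_coeff_norm(1) \<open>0 \<le> K\<close> solution_continuous[OF nonzero_periodic_orbitD(1)[OF x]]
      by (intro abs_integral_unit_interval_le continuous_intros) (auto simp: K_def abs_mult intro!: mult_mono)
    then show ?thesis using integral_unique[OF integral_A_mult_nonzero_periodic_orbit[OF x]] by simp
  qed
  then have "b0 = 0" by (rule eq_0_if_abs_le_linear[OF \<open>0 < \<eta>\<close>])
  have "\<bar>a0\<bar> \<le> M * K * C * \<xi>" if \<xi>: "0 < \<xi>" "\<xi> < \<eta>" for \<xi>
  proof -
    obtain x where x: "nonzero_periodic_orbit x" and bound: "\<And>t. t \<in> {0..1} \<Longrightarrow> 0 < x t \<and> x t \<le> C * \<xi>"
      using orbit[OF \<xi>] by blast
    have bound: "\<bar>x t\<bar> \<le> C * \<xi>" if "t \<in> {0..1}" for t using bound[OF that] by auto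
    have "\<bar>integral {0..1} (\<lambda>t. trig_primitive b1 b2 t * A t * x t)\<bar> \<le> M * K * (C * \<xi>)"
      using bound abs_coeffs_le_coeff_norm(1) M \<open>0 \<le> K\<close> \<open>0 \<le> M\<close>
        solution_continuous[OF nonzero_periodic_orbitD(1)[OF x]]
      by (intro abs_integral_unit_interval_le continuous_intros) (auto simp: K_def abs_mult intro!: mult_mono)
    then show ?thesis
      using integral_unique[OF integral_primitive_A_mult_nonzero_periodic_orbit[OF \<open>b0 = 0\<close> x]] by simp
  qed
  then have "a0 = 0" by (rule eq_0_if_abs_le_linear[OF \<open>0 < \<eta>\<close>])
  have "\<bar>(a2 * b1 - a1 * b2) / (4 * pi)\<bar> \<le> M * K * D * \<xi>" if \<xi>: "0 < \<xi>" "\<xi> < \<eta>" for \<xi>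
  proof -
    obtain x where x: "nonzero_periodic_orbit x" and bound: "\<And>t. t \<in> {0..1} \<Longrightarrow> \<bar>x t - \<xi>\<bar> \<le> D * \<xi>\<^sup>2"
      using orbit[OF \<xi>] by blast
    \<comment> \<open>the integral of beta A x vanishes, while beta A \<xi> integrates to \<xi> times the cross term\<close>
    have "((\<lambda>t. \<xi> * (trig_primitive b1 b2 t * A t) - trig_primitive b1 b2 t * A t * x t)
        has_integral \<xi> * ((a2 * b1 - a1 * b2) / (4 * pi)) - - a0) {0..1}"
      using has_integral_trig_primitive_mult[of b1 b2 a1 a2] \<open>a0 = 0\<close>
      by (intro has_integral_diff has_integral_mult_right
          integral_primitive_A_mult_nonzero_periodic_orbit[OF \<open>b0 = 0\<close> x]) simp
    then have "\<xi> * ((a2 * b1 - a1 * b2) / (4 * pi))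
        = integral {0..1} (\<lambda>t. trig_primitive b1 b2 t * A t * (\<xi> - x t))"
      using \<open>a0 = 0\<close> by (simp add: integral_unique algebra_simps)
    also have "\<bar>\<dots>\<bar> \<le> M * K * (D * \<xi>\<^sup>2)"
      using bound abs_coeffs_le_coeff_norm(1) M \<open>0 \<le> K\<close> \<open>0 \<le> M\<close>
        solution_continuous[OF nonzero_periodic_orbitD(1)[OF x]]
      by (intro abs_integral_unit_interval_le continuous_intros)
        (auto simp: K_def abs_mult abs_minus_commute intro!: mult_mono)
    finally have "\<xi> * \<bar>(a2 * b1 - a1 * b2) / (4 * pi)\<bar> \<le> \<xi> * (M * K * D * \<xi>)"
      using \<xi> by (simp add: abs_mult power2_eq_square mult_ac)
    then show ?thesis using \<xi>(1) by (rule mult_left_le_imp_le)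
  qed
  then have "(a2 * b1 - a1 * b2) / (4 * pi) = 0" by (rule eq_0_if_abs_le_linear[OF \<open>0 < \<eta>\<close>])
  with \<open>a0 = 0\<close> \<open>b0 = 0\<close> show ?thesis by simp
qed

end

lemma has_real_derivative_reflect01:
  assumes "(x has_real_derivative D) (at (1 - t) within {0..1})" "t \<in> {0..1}"
  shows "((\<lambda>t. - x (1 - t)) has_real_derivative D) (at t within {0..1})"
proof -
  have img: "(\<lambda>t. 1 - t) ` {0..1} = {0..1::real}"
    by (auto simp: image_iff intro!: bexI[of _ "1 - _"])
  have "((x \<circ> (\<lambda>t. 1 - t)) has_real_derivative D * (- 1)) (at t within {0..1})"
    by (rule DERIV_image_chain) (use assms img in \<open>auto intro!: derivative_eq_intros\<close>)
  then show ?thesis using DERIV_minus by (fastforce simp: o_def)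
qed

lemma integral_reflect01:
  fixes F :: "real \<Rightarrow> real"
  assumes "continuous_on {0..1} F"
  shows "integral {0..1} (\<lambda>t. F (1 - t)) = integral {0..1} F"
proof -
  define \<Phi> where "\<Phi> s = integral {0..s} F" for s
  have "((\<lambda>t. F (1 - t)) has_integral (\<lambda>t. - \<Phi> (1 - t)) 1 - (\<lambda>t. - \<Phi> (1 - t)) 0) {0..1}"
    unfolding \<Phi>_def
    by (intro fundamental_theorem_of_calculus_real has_real_derivative_reflect01
        integral_has_real_derivative[OF assms]) auto
  then show ?thesis by (simp add: \<Phi>_def integral_unique)
qed

context abel_equation
begin

text \<open>If a0 = a1 = b2 = 0 then A is odd and B even about t = 1/2, so the equation is invariant
  under x(t) \<mapsto> - x(1 - t), which reverses the sign of the multiplier exponent.\<close>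

context
  assumes symmetric: "a0 = 0" "a1 = 0" "b2 = 0"
begin

lemma reflect_coeffs: "A (1 - t) = - A t" "B (1 - t) = B t"
  using symmetric by (simp_all add: trig_poly_def right_diff_distrib sin_diff cos_diff)

lemma solution_reflect:
  assumes x: "solution x"
  shows "solution (\<lambda>t. - x (1 - t))"
  unfolding abel_solution_def
proof
  fix t :: real assume t: "t \<in> {0..1}"
  have "(x has_real_derivative rhs (1 - t) (x (1 - t))) (at (1 - t) within {0..1})"
    using solution_has_derivative[OF x] t by simp
  moreover have "rhs (1 - t) (x (1 - t)) = rhs t (- x (1 - t))"
    by (simp add: rhs_eq reflect_coeffs power2_eq_square power3_eq_cube)
  ultimately show "((\<lambda>t. - x (1 - t)) has_real_derivative rhs t (- x (1 - t))) (at t within {0..1})"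
    using has_real_derivative_reflect01 t by simp
qed

lemma multiplier_exponent_reflect:
  assumes x: "solution x"
  shows "multiplier_exponent (\<lambda>t. - x (1 - t)) = - multiplier_exponent x"
proof -
  define F where "F t = 3 * A t * (x t)\<^sup>2 + 2 * B t * x t" for t
  have "continuous_on {0..1} F"
    unfolding F_def using solution_continuous[OF x] by (intro continuous_intros)
  moreover have "3 * A t * (- x (1 - t))\<^sup>2 + 2 * B t * - x (1 - t) = - F (1 - t)" for t
    using reflect_coeffs[of "1 - t"] by (simp add: F_def)
  ultimately show ?thesis
    by (simp add: multiplier_exponent_def F_def[symmetric] integral_neg integral_reflect01)
qed

lemma two_hyperbolic_orbits_if_multiplier_exponent_nonzero:
  assumes x: "periodic_orbit x" "x 0 \<noteq> 0" and M: "multiplier_exponent x \<noteq> 0"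
  defines "y \<equiv> \<lambda>t. - x (1 - t)"
  shows "periodic_orbit y \<and> nonzero_orbit y \<and> hyperbolic (y 0)" "nonzero_orbit x" "hyperbolic (x 0)"
    "x 0 \<noteq> y 0"
proof -
  have xs: "solution x" and per: "x 0 = x 1" using x by (auto simp: abel_periodic_orbit_def)
  have ys: "solution y" unfolding y_def by (rule solution_reflect[OF xs])
  have "multiplier_exponent y \<noteq> 0"
    using M multiplier_exponent_reflect[OF xs] by (simp add: y_def)
  then have "hyperbolic (y 0)" by (rule hyperbolic_if_multiplier_exponent_nonzero[OF ys])
  moreover have "y 0 = - x 0" "y 1 = - x 0" by (simp_all add: y_def per)
  ultimately show "periodic_orbit y \<and> nonzero_orbit y \<and> hyperbolic (y 0)" "x 0 \<noteq> y 0"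
    using x(2) ys by (auto simp: abel_periodic_orbit_def nonzero_orbit_def intro!: bexI[of _ 0])
  show "nonzero_orbit x" using x(2) by (auto simp: nonzero_orbit_def intro!: bexI[of _ 0])
  show "hyperbolic (x 0)" by (rule hyperbolic_if_multiplier_exponent_nonzero[OF xs M])
qed

end

end

lemma linear_ode_forced_bounds:
  fixes z G r :: "real \<Rightarrow> real"
  assumes d: "\<And>t. t \<in> {0..1} \<Longrightarrow> (z has_real_derivative G t * z t + r t) (at t within {0..1})"
    and Gc: "continuous_on {0..1} G" and GL: "\<And>t. t \<in> {0..1} \<Longrightarrow> \<bar>G t\<bar> \<le> L"
    and z0: "z 0 = 0" and rl: "\<And>t. t \<in> {0..1} \<Longrightarrow> lo \<le> r t" and rh: "\<And>t. t \<in> {0..1} \<Longrightarrow> r t \<le> hi"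
    and lo: "0 \<le> lo"
  shows "lo * exp (- 2 * L) \<le> z 1" "z 1 \<le> hi * exp (2 * L)"
proof -
  define \<Gamma> where "\<Gamma> t = integral {0..t} G" for t
  have GD: "(\<Gamma> has_real_derivative G t) (at t within {0..1})" if "t \<in> {0..1}" for t
    unfolding \<Gamma>_def by (rule integral_has_real_derivative[OF Gc that])
  have L0: "L \<ge> 0" using GL[of 0] by auto
  have \<Gamma>b: "\<bar>\<Gamma> t\<bar> \<le> L" if t: "t \<in> {0..1}" for t
  proof -
    have "\<bar>\<Gamma> t\<bar> \<le> integral {0..t} (\<lambda>s::real. L)" unfolding \<Gamma>_def
      by (rule integral_norm_bound_integral[where 'a=real, simplified])
        (use t GL continuous_on_unit_interval_integrable[OF Gc t] in auto)
    also have "\<dots> = L * t" using t by simp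
    also have "\<dots> \<le> L" using t L0 by (auto intro: mult_left_le)
    finally show ?thesis .
  qed
  define \<phi> where "\<phi> t = z t * exp (- \<Gamma> t)" for t
  have \<phi>D: "(\<phi> has_real_derivative r t * exp (- \<Gamma> t)) (at t within {0..1})" if t: "t \<in> {0..1}" for t
  proof -
    have "(\<phi> has_real_derivative (G t * z t + r t) * exp (- \<Gamma> t) + z t * (exp (- \<Gamma> t) * - G t)) (at t within {0..1})"
      unfolding \<phi>_def by (rule derivative_eq_intros d[OF t] GD[OF t] refl | simp)+
    then show ?thesis by (simp add: algebra_simps)
  qed
  have e1: "exp (- L) \<le> exp (- \<Gamma> t)" "exp (- \<Gamma> t) \<le> exp L" if "t \<in> {0..1}" for t
    using \<Gamma>b[OF that] by auto
  have low: "(\<lambda>t. \<phi> t - lo * exp (- L) * t) 0 \<le> (\<lambda>t. \<phi> t - lo * exp (- L) * t) 1"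
  proof (rule DERIV_nonneg_imp_increasing_Icc[where f="\<lambda>t. \<phi> t - lo * exp (- L) * t" and f'="\<lambda>t. r t * exp (- \<Gamma> t) - lo * exp (- L)" and a=0 and b=1])
    fix t :: real assume t: "t \<in> {0..1}"
    show "((\<lambda>t. \<phi> t - lo * exp (- L) * t) has_real_derivative r t * exp (- \<Gamma> t) - lo * exp (- L)) (at t within {0..1})"
      by (rule derivative_eq_intros \<phi>D[OF t] refl | simp)+
    have "lo * exp (- L) \<le> r t * exp (- \<Gamma> t)" using rl[OF t] lo e1[OF t] by (intro mult_mono) auto
    then show "0 \<le> r t * exp (- \<Gamma> t) - lo * exp (- L)" by simp
  qed auto
  have high: "(\<lambda>t. hi * exp L * t - \<phi> t) 0 \<le> (\<lambda>t. hi * exp L * t - \<phi> t) 1"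
  proof (rule DERIV_nonneg_imp_increasing_Icc[where f="\<lambda>t. hi * exp L * t - \<phi> t" and f'="\<lambda>t. hi * exp L - r t * exp (- \<Gamma> t)" and a=0 and b=1])
    fix t :: real assume t: "t \<in> {0..1}"
    show "((\<lambda>t. hi * exp L * t - \<phi> t) has_real_derivative hi * exp L - r t * exp (- \<Gamma> t)) (at t within {0..1})"
      by (rule derivative_eq_intros \<phi>D[OF t] refl | simp)+
    have "r t * exp (- \<Gamma> t) \<le> hi * exp L" using rh[OF t] rl[OF t] lo e1[OF t] by (intro mult_mono) auto
    then show "0 \<le> hi * exp L - r t * exp (- \<Gamma> t)" by simp
  qed auto
  have p0: "\<phi> 0 = 0" by (simp add: \<phi>_def z0)
  have z1: "z 1 = \<phi> 1 * exp (\<Gamma> 1)" by (simp add: \<phi>_def exp_minus)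
  have g1: "exp (- L) \<le> exp (\<Gamma> 1)" "exp (\<Gamma> 1) \<le> exp L" using \<Gamma>b[of 1] by auto
  have phl: "lo * exp (- L) \<le> \<phi> 1" using low p0 by simp
  have phh: "\<phi> 1 \<le> hi * exp L" using high p0 by simp
  have ph0: "0 \<le> \<phi> 1" using phl lo by (meson exp_ge_zero mult_nonneg_nonneg order_trans)
  have "lo * exp (- L) * exp (- L) \<le> \<phi> 1 * exp (\<Gamma> 1)"
    using phl g1 lo ph0 by (intro mult_mono) auto
  moreover have "exp (- L) * exp (- L) = exp (- 2 * L)" by (simp add: exp_add[symmetric])
  ultimately show "lo * exp (- 2 * L) \<le> z 1" unfolding z1 by (simp add: mult.assoc)
  have hi0: "hi \<ge> 0" using rl[of 0] rh[of 0] lo by auto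
  have "\<phi> 1 * exp (\<Gamma> 1) \<le> hi * exp L * exp L"
    using phh g1 ph0 hi0 by (intro mult_mono) auto
  moreover have "exp L * exp L = exp (2 * L)" by (simp add: exp_add[symmetric])
  ultimately show "z 1 \<le> hi * exp (2 * L)" unfolding z1 by (simp add: mult.assoc)
qed

lemma implicit_function_derivative_zero:
  fixes g :: "real \<Rightarrow> real \<Rightarrow> real" and h :: "real \<Rightarrow> real"
  assumes zero: "\<forall>\<^sub>F \<xi> in at \<xi>0. g (h \<xi>) \<xi> = 0" "g (h \<xi>0) \<xi>0 = 0"
    and lower: "\<forall>\<^sub>F \<xi> in at \<xi>0. m * \<bar>h \<xi> - h \<xi>0\<bar> \<le> \<bar>g (h \<xi>) \<xi> - g (h \<xi>0) \<xi>\<bar>" and "0 < m"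
    and deriv: "((\<lambda>\<xi>. g (h \<xi>0) \<xi>) has_real_derivative 0) (at \<xi>0)"
  shows "(h has_real_derivative 0) (at \<xi>0)"
  unfolding has_field_derivative_iff
proof (rule Lim_null_comparison)
  show "\<forall>\<^sub>F \<xi> in at \<xi>0. norm ((h \<xi> - h \<xi>0) / (\<xi> - \<xi>0)) \<le> \<bar>(g (h \<xi>0) \<xi> - g (h \<xi>0) \<xi>0) / (\<xi> - \<xi>0)\<bar> / m"
    using zero(1) lower
  proof eventually_elim
    case (elim \<xi>)
    then have "\<bar>h \<xi> - h \<xi>0\<bar> \<le> \<bar>g (h \<xi>0) \<xi> - g (h \<xi>0) \<xi>0\<bar> / m"
      using zero(2) \<open>0 < m\<close> by (simp add: field_simps)
    then have "\<bar>h \<xi> - h \<xi>0\<bar> / \<bar>\<xi> - \<xi>0\<bar> \<le> \<bar>g (h \<xi>0) \<xi> - g (h \<xi>0) \<xi>0\<bar> / m / \<bar>\<xi> - \<xi>0\<bar>"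
      by (rule divide_right_mono) simp
    then show ?case by (simp add: abs_divide mult.commute)
  qed
  have "((\<lambda>\<xi>. (g (h \<xi>0) \<xi> - g (h \<xi>0) \<xi>0) / (\<xi> - \<xi>0)) \<longlongrightarrow> 0) (at \<xi>0)"
    using deriv by (simp add: has_field_derivative_iff)
  then show "((\<lambda>\<xi>. \<bar>(g (h \<xi>0) \<xi> - g (h \<xi>0) \<xi>0) / (\<xi> - \<xi>0)\<bar> / m) \<longlongrightarrow> 0) (at \<xi>0)"
    by (intro tendsto_divide_zero tendsto_rabs_zero)
qed

text \<open>Part (c) is proved for the family a = (0, 0, 1), b = (\<beta>, 1, 0), i.e.
  x' = sin(2 pi t) x^3 + (\<beta> + cos(2 pi t)) x^2.\<close>

definition family_displacement :: "real \<Rightarrow> real \<Rightarrow> real" where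
  "family_displacement \<beta> \<xi> = abel_poincare 0 0 1 \<beta> 1 0 \<xi> - \<xi>"

lemma family_small_solution:
  assumes \<beta>: "\<bar>\<beta>\<bar> \<le> 1" and \<xi>: "0 < \<xi>" "\<xi> \<le> exp (- 60)"
  obtains x where "abel_solution 0 0 1 \<beta> 1 0 x" "x 0 = \<xi>" "family_displacement \<beta> \<xi> = x 1 - \<xi>"
    "\<And>t. t \<in> {0..1} \<Longrightarrow> \<bar>x t - \<xi>\<bar> \<le> 6 * exp 45 * \<xi>\<^sup>2"
    "\<And>t. t \<in> {0..1} \<Longrightarrow> \<xi> / 2 \<le> x t \<and> x t \<le> 2 * \<xi>"
proof -
  have "abel_coeff_norm 0 0 1 \<beta> 1 0 \<le> 3" "\<bar>\<xi>\<bar> < exp (- 5 * 3)"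
    using \<beta> \<xi> by (auto simp: abel_coeff_norm_def intro: le_less_trans)
  then obtain x where x: "abel_solution 0 0 1 \<beta> 1 0 x" "x 0 = \<xi>"
    and close: "\<And>t. t \<in> {0..1} \<Longrightarrow> \<bar>x t - \<xi>\<bar> \<le> 2 * 3 * exp (15 * 3) * \<xi>\<^sup>2"
    by (rule abel_equation.small_solution) blast
  have "6 * exp 45 * \<xi> \<le> 6 * exp 45 * exp (- 60)" using \<xi> by simp
  also have "\<dots> = 6 / exp 15" by (simp add: exp_minus field_simps exp_add[symmetric])
  also have "\<dots> \<le> 1 / 2" using exp_ge_add_one_self[of 15] by (simp add: field_simps)
  finally have "6 * exp 45 * \<xi>\<^sup>2 \<le> \<xi> / 2" using \<xi> by (simp add: power2_eq_square field_simps)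
  have close': "\<bar>x t - \<xi>\<bar> \<le> 6 * exp 45 * \<xi>\<^sup>2" if "t \<in> {0..1}" for t
    using close[OF that] by simp
  have "family_displacement \<beta> \<xi> = x 1 - \<xi>"
    using abel_equation.poincare_solution[OF x(1)] x(2) by (simp add: family_displacement_def)
  then show ?thesis
  proof (rule that[OF x])
    fix t :: real assume t: "t \<in> {0..1}"
    show "\<bar>x t - \<xi>\<bar> \<le> 6 * exp 45 * \<xi>\<^sup>2" by (rule close'[OF t])
    show "\<xi> / 2 \<le> x t \<and> x t \<le> 2 * \<xi>"
      using close'[OF t] \<open>6 * exp 45 * \<xi>\<^sup>2 \<le> \<xi> / 2\<close> \<xi>(1) by (simp add: abs_le_iff)
  qed
qed

lemma family_displacement_rate:
  assumes \<beta>: "\<bar>\<beta>\<bar> \<le> 1" "\<bar>\<beta>'\<bar> \<le> 1" "\<beta> \<le> \<beta>'" and \<xi>: "0 < \<xi>" "\<xi> \<le> exp (- 60)"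
  shows "(\<beta>' - \<beta>) * (\<xi>\<^sup>2 / 4) * exp (- 30) \<le> family_displacement \<beta>' \<xi> - family_displacement \<beta> \<xi>"
    and "family_displacement \<beta>' \<xi> - family_displacement \<beta> \<xi> \<le> (\<beta>' - \<beta>) * (4 * \<xi>\<^sup>2) * exp 30"
proof -
  obtain x where x: "abel_solution 0 0 1 \<beta> 1 0 x" "x 0 = \<xi>" "family_displacement \<beta> \<xi> = x 1 - \<xi>"
    and "\<And>t. t \<in> {0..1} \<Longrightarrow> \<bar>x t - \<xi>\<bar> \<le> 6 * exp 45 * \<xi>\<^sup>2"
    and x_bound: "\<And>t. t \<in> {0..1} \<Longrightarrow> \<xi> / 2 \<le> x t \<and> x t \<le> 2 * \<xi>"
    by (erule family_small_solution[OF \<beta>(1) \<xi>])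
  obtain y where y: "abel_solution 0 0 1 \<beta>' 1 0 y" "y 0 = \<xi>" "family_displacement \<beta>' \<xi> = y 1 - \<xi>"
    and "\<And>t. t \<in> {0..1} \<Longrightarrow> \<bar>y t - \<xi>\<bar> \<le> 6 * exp 45 * \<xi>\<^sup>2"
    and y_bound: "\<And>t. t \<in> {0..1} \<Longrightarrow> \<xi> / 2 \<le> y t \<and> y t \<le> 2 * \<xi>"
    by (erule family_small_solution[OF \<beta>(2) \<xi>])
  have "2 * exp (- 60) \<le> (1::real)" using exp_ge_add_one_self[of 60] by (simp add: exp_minus field_simps)
  then have "2 * \<xi> \<le> 1" using \<xi> by linarith
  define G where "G t = abel_equation.rhs_slope 0 0 1 \<beta> 1 0 t (y t) (x t)" for t
  have z': "((\<lambda>t. y t - x t) has_real_derivative G t * (y t - x t) + (\<beta>' - \<beta>) * (y t)\<^sup>2) (at t within {0..1})"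
    if t: "t \<in> {0..1}" for t
  proof -
    have "((\<lambda>t. y t - x t) has_real_derivative
        abel_rhs 0 0 1 \<beta>' 1 0 t (y t) - abel_rhs 0 0 1 \<beta> 1 0 t (x t)) (at t within {0..1})"
      using abel_equation.solution_has_derivative[OF x(1) t] abel_equation.solution_has_derivative[OF y(1) t]
      by (intro derivative_intros)
    moreover have "abel_rhs 0 0 1 \<beta>' 1 0 t (y t) - abel_rhs 0 0 1 \<beta> 1 0 t (x t)
        = G t * (y t - x t) + (\<beta>' - \<beta>) * (y t)\<^sup>2"
      using abel_equation.rhs_diff_eq[of 0 0 1 \<beta> 1 0 t "y t" "x t"]
      by (simp add: G_def abel_rhs_def algebra_simps)
    ultimately show ?thesis by simp
  qed
  have G_cont: "continuous_on {0..1} G"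
    unfolding G_def abel_equation.rhs_slope_def
    using abel_equation.solution_continuous[OF x(1)] abel_equation.solution_continuous[OF y(1)]
    by (intro continuous_intros)
  have G_bound: "\<bar>G t\<bar> \<le> 15" if "t \<in> {0..1}" for t
    using abel_equation.abs_rhs_slope_le[of "y t" 1 "x t" 0 0 1 \<beta> 1 0 3 t] x_bound[OF that] y_bound[OF that]
      \<open>2 * \<xi> \<le> 1\<close> \<beta> \<xi> by (simp add: G_def abel_coeff_norm_def)
  have forcing: "(\<beta>' - \<beta>) * (\<xi>\<^sup>2 / 4) \<le> (\<beta>' - \<beta>) * (y t)\<^sup>2" "(\<beta>' - \<beta>) * (y t)\<^sup>2 \<le> (\<beta>' - \<beta>) * (4 * \<xi>\<^sup>2)"
    if "t \<in> {0..1}" for t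
  proof -
    have "(\<xi> / 2)\<^sup>2 \<le> (y t)\<^sup>2" "(y t)\<^sup>2 \<le> (2 * \<xi>)\<^sup>2"
      using y_bound[OF that] \<xi> by (intro power_mono; linarith)+
    then have "\<xi>\<^sup>2 / 4 \<le> (y t)\<^sup>2" "(y t)\<^sup>2 \<le> 4 * \<xi>\<^sup>2" by (simp_all add: power_divide power_mult_distrib)
    then show "(\<beta>' - \<beta>) * (\<xi>\<^sup>2 / 4) \<le> (\<beta>' - \<beta>) * (y t)\<^sup>2" "(\<beta>' - \<beta>) * (y t)\<^sup>2 \<le> (\<beta>' - \<beta>) * (4 * \<xi>\<^sup>2)"
      using \<beta>(3) by (intro mult_left_mono; simp)+
  qed
  have "(\<beta>' - \<beta>) * (\<xi>\<^sup>2 / 4) * exp (- 2 * 15) \<le> y 1 - x 1"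
    "y 1 - x 1 \<le> (\<beta>' - \<beta>) * (4 * \<xi>\<^sup>2) * exp (2 * 15)"
    using linear_ode_forced_bounds[OF z' G_cont G_bound _ forcing] x(2) y(2) \<beta>(3) by simp_all
  then show "(\<beta>' - \<beta>) * (\<xi>\<^sup>2 / 4) * exp (- 30) \<le> family_displacement \<beta>' \<xi> - family_displacement \<beta> \<xi>"
    "family_displacement \<beta>' \<xi> - family_displacement \<beta> \<xi> \<le> (\<beta>' - \<beta>) * (4 * \<xi>\<^sup>2) * exp 30"
    using x(3) y(3) by simp_all
qed

lemma family_displacement_lipschitz:
  assumes "\<bar>\<beta>\<bar> \<le> 1" "\<bar>\<beta>'\<bar> \<le> 1" and \<xi>: "0 < \<xi>" "\<xi> \<le> exp (- 60)"
  shows "\<xi>\<^sup>2 / 4 * exp (- 30) * \<bar>\<beta>' - \<beta>\<bar> \<le> \<bar>family_displacement \<beta>' \<xi> - family_displacement \<beta> \<xi>\<bar>"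
    and "\<bar>family_displacement \<beta>' \<xi> - family_displacement \<beta> \<xi>\<bar> \<le> 4 * \<xi>\<^sup>2 * exp 30 * \<bar>\<beta>' - \<beta>\<bar>"
proof -
  have "\<xi>\<^sup>2 / 4 * exp (- 30) * \<bar>\<beta>' - \<beta>\<bar> \<le> \<bar>family_displacement \<beta>' \<xi> - family_displacement \<beta> \<xi>\<bar> \<and>
      \<bar>family_displacement \<beta>' \<xi> - family_displacement \<beta> \<xi>\<bar> \<le> 4 * \<xi>\<^sup>2 * exp 30 * \<bar>\<beta>' - \<beta>\<bar>"
  proof (cases "\<beta> \<le> \<beta>'")
    case True
    note rate = family_displacement_rate[OF assms(1,2) True \<xi>]
    have "0 \<le> (\<beta>' - \<beta>) * (\<xi>\<^sup>2 / 4) * exp (- 30)" using True by simp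
    then have "\<bar>family_displacement \<beta>' \<xi> - family_displacement \<beta> \<xi>\<bar>
        = family_displacement \<beta>' \<xi> - family_displacement \<beta> \<xi>" using rate(1) by linarith
    then show ?thesis using rate True by (simp add: mult_ac)
  next
    case False
    note rate = family_displacement_rate[OF assms(2,1) _ \<xi>]
    have "0 \<le> (\<beta> - \<beta>') * (\<xi>\<^sup>2 / 4) * exp (- 30)" using False by simp
    then have "\<bar>family_displacement \<beta>' \<xi> - family_displacement \<beta> \<xi>\<bar>
        = family_displacement \<beta> \<xi> - family_displacement \<beta>' \<xi>" using rate(1) False by linarith
    then show ?thesis using rate False by (simp add: abs_of_neg mult_ac)
  qed
  then show "\<xi>\<^sup>2 / 4 * exp (- 30) * \<bar>\<beta>' - \<beta>\<bar> \<le> \<bar>family_displacement \<beta>' \<xi> - family_displacement \<beta> \<xi>\<bar>"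
    "\<bar>family_displacement \<beta>' \<xi> - family_displacement \<beta> \<xi>\<bar> \<le> 4 * \<xi>\<^sup>2 * exp 30 * \<bar>\<beta>' - \<beta>\<bar>"
    by auto
qed

lemma family_displacement_0:
  assumes \<xi>: "0 < \<xi>" "\<xi> \<le> exp (- 60)"
  shows "\<bar>family_displacement 0 \<xi>\<bar> \<le> (8 + 18 * exp 45) * \<xi> ^ 3"
proof -
  obtain x where x: "abel_solution 0 0 1 0 1 0 x" "x 0 = \<xi>" "family_displacement 0 \<xi> = x 1 - \<xi>"
    and close: "\<And>t. t \<in> {0..1} \<Longrightarrow> \<bar>x t - \<xi>\<bar> \<le> 6 * exp 45 * \<xi>\<^sup>2"
    and bound: "\<And>t. t \<in> {0..1} \<Longrightarrow> \<xi> / 2 \<le> x t \<and> x t \<le> 2 * \<xi>"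
    using family_small_solution[of 0, OF _ \<xi>] by auto
  define f where "f t = abel_rhs 0 0 1 0 1 0 t (x t) - \<xi>\<^sup>2 * trig_poly 0 1 0 t" for t
  \<comment> \<open>subtracting the zero-mean term \<xi>^2 cos(2 pi t) leaves an integrand of order \<xi>^3\<close>
  have "(f has_integral (x 1 - x 0) - \<xi>\<^sup>2 * 0) {0..1}"
    unfolding f_def
    by (intro has_integral_diff has_integral_mult_right has_integral_trig_poly fundamental_theorem_of_calculus_real
        abel_equation.solution_has_derivative[OF x(1)]) simp_all
  then have "family_displacement 0 \<xi> = integral {0..1} f" using x by (simp add: integral_unique)
  also have "\<bar>\<dots>\<bar> \<le> (8 + 18 * exp 45) * \<xi> ^ 3"
  proof (rule abs_integral_unit_interval_le)
    show "continuous_on {0..1} f"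
      unfolding f_def abel_rhs_def using abel_equation.solution_continuous[OF x(1)] by (intro continuous_intros)
    fix t :: real assume t: "t \<in> {0..1}"
    have x0: "0 \<le> x t" using bound[OF t] \<xi> by linarith
    have "f t = sin (2 * pi * t) * x t ^ 3 + cos (2 * pi * t) * ((x t - \<xi>) * (x t + \<xi>))"
      by (simp add: f_def abel_rhs_def trig_poly_def algebra_simps power2_eq_square)
    also have "\<bar>\<dots>\<bar> \<le> 1 * (2 * \<xi>) ^ 3 + 1 * ((6 * exp 45 * \<xi>\<^sup>2) * (3 * \<xi>))"
    proof (rule order_trans[OF abs_triangle_ineq add_mono])
      have "x t ^ 3 \<le> (2 * \<xi>) ^ 3" using bound[OF t] x0 by (intro power_mono) auto
      then show "\<bar>sin (2 * pi * t) * x t ^ 3\<bar> \<le> 1 * (2 * \<xi>) ^ 3"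
        unfolding abs_mult using x0 by (intro mult_mono) auto
      show "\<bar>cos (2 * pi * t) * ((x t - \<xi>) * (x t + \<xi>))\<bar> \<le> 1 * ((6 * exp 45 * \<xi>\<^sup>2) * (3 * \<xi>))"
        unfolding abs_mult using close[OF t] bound[OF t] x0 \<xi> by (intro mult_mono) auto
    qed
    also have "\<dots> = (8 + 18 * exp 45) * \<xi> ^ 3" by (simp add: algebra_simps power3_eq_cube power2_eq_square)
    finally show "\<bar>f t\<bar> \<le> (8 + 18 * exp 45) * \<xi> ^ 3" .
  qed
  finally show ?thesis .
qed

lemma family_periodic_parameter:
  obtains c \<xi>1 where "0 < \<xi>1" "\<xi>1 \<le> exp (- 60)" "0 \<le> c" "c * \<xi>1 \<le> 1"
    "\<And>\<xi>. 0 < \<xi> \<Longrightarrow> \<xi> < \<xi>1 \<Longrightarrow> \<exists>\<beta>. \<bar>\<beta>\<bar> \<le> c * \<xi> \<and> family_displacement \<beta> \<xi> = 0"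
proof -
  define C where "C = 8 + 18 * exp (45::real)"
  define c where "c = 8 * C * exp 30"
  have "0 < C" by (simp add: C_def add_pos_pos)
  then have "0 < c" by (simp add: c_def)
  define \<xi>1 where "\<xi>1 = min (exp (- 60)) (1 / c)"
  have "c * \<xi>1 \<le> 1" using \<open>0 < c\<close> by (simp add: \<xi>1_def min_def field_simps)
  moreover have "\<exists>\<beta>. \<bar>\<beta>\<bar> \<le> c * \<xi> \<and> family_displacement \<beta> \<xi> = 0" if \<xi>: "0 < \<xi>" "\<xi> < \<xi>1" for \<xi>
  proof -
    define b where "b = c * \<xi>"
    have \<xi>': "0 < \<xi>" "\<xi> \<le> exp (- 60)" using \<xi> by (auto simp: \<xi>1_def)
    have "c * \<xi> \<le> c * \<xi>1" using \<xi> \<open>0 < c\<close> by simp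
    then have b: "0 \<le> b" "b \<le> 1"
      unfolding b_def using \<xi> \<open>0 < c\<close> \<open>c * \<xi>1 \<le> 1\<close> by (simp, linarith)
    \<comment> \<open>moving \<beta> by \<plusminus>b changes the displacement by at least 2 C \<xi>^3, which dominates its value at 0\<close>
    have gain: "b * (\<xi>\<^sup>2 / 4) * exp (- 30) = 2 * C * \<xi> ^ 3"
      by (simp add: b_def c_def power2_eq_square power3_eq_cube field_simps exp_minus)
    have "b * (\<xi>\<^sup>2 / 4) * exp (- 30) \<le> family_displacement b \<xi> - family_displacement 0 \<xi>"
      using family_displacement_rate(1)[of 0 b \<xi>] b \<xi>' by simp
    moreover have "b * (\<xi>\<^sup>2 / 4) * exp (- 30) \<le> family_displacement 0 \<xi> - family_displacement (- b) \<xi>"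
      using family_displacement_rate(1)[of "- b" 0 \<xi>] b \<xi>' by simp
    moreover have "\<bar>family_displacement 0 \<xi>\<bar> \<le> C * \<xi> ^ 3"
      using family_displacement_0[OF \<xi>'] by (simp add: C_def)
    moreover have "0 < C * \<xi> ^ 3" using \<open>0 < C\<close> \<xi> by simp
    ultimately have sign: "family_displacement (- b) \<xi> \<le> 0" "0 \<le> family_displacement b \<xi>"
      unfolding gain by linarith+
    have "continuous_on {- b..b} (\<lambda>\<beta>. family_displacement \<beta> \<xi>)"
    proof (rule lipschitz_on_continuous_on[OF lipschitz_onI])
      fix \<beta> \<beta>' assume "\<beta> \<in> {- b..b}" "\<beta>' \<in> {- b..b}"
      then have "\<bar>\<beta>\<bar> \<le> 1" "\<bar>\<beta>'\<bar> \<le> 1" using b by auto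
      then show "dist (family_displacement \<beta> \<xi>) (family_displacement \<beta>' \<xi>) \<le> 4 * \<xi>\<^sup>2 * exp 30 * dist \<beta> \<beta>'"
        using family_displacement_lipschitz(2)[of \<beta>' \<beta> \<xi>] \<xi>' by (simp add: dist_real_def abs_minus_commute)
    qed simp
    then obtain \<beta> where "- b \<le> \<beta>" "\<beta> \<le> b" "family_displacement \<beta> \<xi> = 0"
      using IVT'[of "\<lambda>\<beta>. family_displacement \<beta> \<xi>" "- b" 0 b] sign b by auto
    then show ?thesis by (intro exI[of _ \<beta>]) (auto simp: b_def)
  qed
  moreover have "0 < \<xi>1" "\<xi>1 \<le> exp (- 60)" using \<open>0 < c\<close> by (auto simp: \<xi>1_def)
  ultimately show ?thesis using that[of \<xi>1 c] \<open>0 < c\<close> by simp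
qed

abbreviation (input) two_hyperbolic_orbits :: "real \<Rightarrow> real \<Rightarrow> real \<Rightarrow> real \<Rightarrow> real \<Rightarrow> real \<Rightarrow> bool" where
  "two_hyperbolic_orbits a0 a1 a2 b0 b1 b2 \<equiv> \<exists>x y.
      abel_periodic_orbit a0 a1 a2 b0 b1 b2 x \<and> nonzero_orbit x \<and> abel_hyperbolic a0 a1 a2 b0 b1 b2 (x 0) \<and>
      abel_periodic_orbit a0 a1 a2 b0 b1 b2 y \<and> nonzero_orbit y \<and> abel_hyperbolic a0 a1 a2 b0 b1 b2 (y 0) \<and>
      x 0 \<noteq> y 0"

lemma family_displacement_derivative_if_not_two_orbits:
  assumes \<beta>: "\<bar>\<beta>\<bar> \<le> 1" and \<xi>: "0 < \<xi>" "\<xi> \<le> exp (- 60)" and zero: "family_displacement \<beta> \<xi> = 0"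
    and not_two: "\<not> two_hyperbolic_orbits 0 0 1 \<beta> 1 0"
  shows "((\<lambda>\<xi>. family_displacement \<beta> \<xi>) has_real_derivative 0) (at \<xi>)"
proof -
  interpret abel_equation 0 0 1 \<beta> 1 0 .
  obtain x where x: "solution x" "x 0 = \<xi>" "family_displacement \<beta> \<xi> = x 1 - \<xi>"
    and "\<And>t. t \<in> {0..1} \<Longrightarrow> \<bar>x t - \<xi>\<bar> \<le> 6 * exp 45 * \<xi>\<^sup>2"
    and "\<And>t. t \<in> {0..1} \<Longrightarrow> \<xi> / 2 \<le> x t \<and> x t \<le> 2 * \<xi>"
    by (erule family_small_solution[OF \<beta> \<xi>])
  have "periodic_orbit x" using x zero by (simp add: abel_periodic_orbit_def)
  have "multiplier_exponent x = 0"
  proof (rule ccontr)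
    assume "multiplier_exponent x \<noteq> 0"
    note two = two_hyperbolic_orbits_if_multiplier_exponent_nonzero[OF refl refl refl \<open>periodic_orbit x\<close> _ this]
    have "x 0 \<noteq> 0" using x(2) \<xi>(1) by simp
    then have "two_hyperbolic_orbits 0 0 1 \<beta> 1 0"
      using two \<open>periodic_orbit x\<close> by (intro exI[of _ x] exI[of _ "\<lambda>t. - x (1 - t)"]) simp
    with not_two show False ..
  qed
  then have "(poincare has_real_derivative 1) (at \<xi>)"
    using has_derivative_poincare[OF x(1)] x(2) by simp
  then show ?thesis
    unfolding family_displacement_def by (auto intro!: derivative_eq_intros)
qed

lemma family_center_if_displacement_vanishes:
  assumes "0 < \<xi>1" "\<xi>1 \<le> exp (- 60)" and zero: "\<And>\<xi>. 0 < \<xi> \<Longrightarrow> \<xi> < \<xi>1 \<Longrightarrow> family_displacement 0 \<xi> = 0"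
  shows "abel_center 0 0 1 0 1 0"
proof -
  interpret abel_equation 0 0 1 0 1 0 .
  have positive: "\<exists>x. periodic_orbit x \<and> x 0 = \<xi>" if "0 < \<xi>" "\<xi> < \<xi>1" for \<xi>
  proof -
    have "\<bar>0::real\<bar> \<le> 1" "0 < \<xi>" "\<xi> \<le> exp (- 60)" using that assms by simp_all
    then obtain x where "solution x" "x 0 = \<xi>" "family_displacement 0 \<xi> = x 1 - \<xi>"
      and "\<And>t. t \<in> {0..1} \<Longrightarrow> \<bar>x t - \<xi>\<bar> \<le> 6 * exp 45 * \<xi>\<^sup>2"
      and "\<And>t. t \<in> {0..1} \<Longrightarrow> \<xi> / 2 \<le> x t \<and> x t \<le> 2 * \<xi>"
      by (rule family_small_solution) blast
    then show ?thesis using zero[OF that] by (auto simp: abel_periodic_orbit_def)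
  qed
  have "\<exists>x. periodic_orbit x \<and> x 0 = \<xi>" if \<xi>: "\<bar>\<xi>\<bar> < \<xi>1" for \<xi>
  proof (cases "0 < \<xi>")
    case True
    then show ?thesis using positive \<xi> by simp
  next
    case False
    show ?thesis
    proof (cases "\<xi> = 0")
      case True
      then show ?thesis using solution_zero by (auto simp: abel_periodic_orbit_def)
    next
      case False
      then obtain x where x: "periodic_orbit x" "x 0 = - \<xi>"
        using positive[of "- \<xi>"] \<open>\<not> 0 < \<xi>\<close> \<xi> by auto
      then have "periodic_orbit (\<lambda>t. - x (1 - t))"
        using solution_reflect[OF refl refl refl] by (auto simp: abel_periodic_orbit_def)
      then show ?thesis using x by (intro exI[of _ "\<lambda>t. - x (1 - t)"]) (simp add: abel_periodic_orbit_def)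
    qed
  qed
  then show ?thesis unfolding abel_center_def using \<open>0 < \<xi>1\<close> by blast
qed

text \<open>If no parameter \<beta> admits two hyperbolic orbits, then the periodic orbits near 0 are all
  nonhyperbolic, so the implicit function \<xi> \<mapsto> \<beta> with family_displacement \<beta> \<xi> = 0 has zero
  derivative; being O(\<xi>), it vanishes identically.\<close>

lemma family_zero_displacement_if_not_two_orbits:
  assumes not_two: "\<And>\<beta>. \<not> two_hyperbolic_orbits 0 0 1 \<beta> 1 0"
  obtains \<xi>1 where "0 < \<xi>1" "\<xi>1 \<le> exp (- 60)" "\<And>\<xi>. 0 < \<xi> \<Longrightarrow> \<xi> < \<xi>1 \<Longrightarrow> family_displacement 0 \<xi> = 0"
proof -
  obtain c \<xi>1 where \<xi>1: "0 < \<xi>1" "\<xi>1 \<le> exp (- 60)" "0 \<le> c" "c * \<xi>1 \<le> 1"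
    and param: "\<And>\<xi>. 0 < \<xi> \<Longrightarrow> \<xi> < \<xi>1 \<Longrightarrow> \<exists>\<beta>. \<bar>\<beta>\<bar> \<le> c * \<xi> \<and> family_displacement \<beta> \<xi> = 0"
    by (rule family_periodic_parameter) blast
  define h where "h \<xi> = (SOME \<beta>. \<bar>\<beta>\<bar> \<le> c * \<xi> \<and> family_displacement \<beta> \<xi> = 0)" for \<xi>
  have h: "\<bar>h \<xi>\<bar> \<le> c * \<xi>" "family_displacement (h \<xi>) \<xi> = 0" "\<bar>h \<xi>\<bar> \<le> 1" if "0 < \<xi>" "\<xi> < \<xi>1" for \<xi>
  proof -
    show "\<bar>h \<xi>\<bar> \<le> c * \<xi>" "family_displacement (h \<xi>) \<xi> = 0"
      using someI_ex[OF param[OF that]] by (simp_all add: h_def)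
    moreover have "c * \<xi> \<le> c * \<xi>1" using that \<xi>1(3) by (simp add: mult_left_mono)
    ultimately show "\<bar>h \<xi>\<bar> \<le> 1" using \<xi>1(4) by linarith
  qed
  have "(h has_real_derivative 0) (at \<xi>0)" if \<xi>0: "0 < \<xi>0" "\<xi>0 < \<xi>1" for \<xi>0
  proof (rule implicit_function_derivative_zero[where g=family_displacement])
    have near: "\<forall>\<^sub>F \<xi> in at \<xi>0. \<xi> \<in> {\<xi>0 / 2<..<\<xi>1}"
      using \<xi>0 by (intro eventually_at_in_open') auto
    have "\<xi>0\<^sup>2 / 16 * exp (- 30) * \<bar>h \<xi> - h \<xi>0\<bar>
        \<le> \<bar>family_displacement (h \<xi>) \<xi> - family_displacement (h \<xi>0) \<xi>\<bar>"
      if \<xi>: "\<xi> \<in> {\<xi>0 / 2<..<\<xi>1}" for \<xi>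
    proof -
      have "0 < \<xi>" "\<xi> < \<xi>1" using \<xi> \<xi>0 by auto
      have "\<xi>0\<^sup>2 / 16 \<le> \<xi>\<^sup>2 / 4" using \<xi> \<xi>0 power_mono[of "\<xi>0 / 2" \<xi> 2] by (simp add: power_divide)
      then have "\<xi>0\<^sup>2 / 16 * exp (- 30) * \<bar>h \<xi> - h \<xi>0\<bar> \<le> \<xi>\<^sup>2 / 4 * exp (- 30) * \<bar>h \<xi> - h \<xi>0\<bar>"
        by (intro mult_right_mono) auto
      also have "\<dots> \<le> \<bar>family_displacement (h \<xi>) \<xi> - family_displacement (h \<xi>0) \<xi>\<bar>"
        using h(3)[OF \<xi>0] h(3)[OF \<open>0 < \<xi>\<close> \<open>\<xi> < \<xi>1\<close>] \<open>0 < \<xi>\<close> \<open>\<xi> < \<xi>1\<close> \<xi>1(2)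
        by (intro family_displacement_lipschitz(1)) auto
      finally show ?thesis .
    qed
    with near show "\<forall>\<^sub>F \<xi> in at \<xi>0. \<xi>0\<^sup>2 / 16 * exp (- 30) * \<bar>h \<xi> - h \<xi>0\<bar>
        \<le> \<bar>family_displacement (h \<xi>) \<xi> - family_displacement (h \<xi>0) \<xi>\<bar>"
      by (auto elim: eventually_mono)
    from near show "\<forall>\<^sub>F \<xi> in at \<xi>0. family_displacement (h \<xi>) \<xi> = 0"
      by (rule eventually_mono) (use \<xi>0 h(2) in auto)
    show "family_displacement (h \<xi>0) \<xi>0 = 0" "0 < \<xi>0\<^sup>2 / 16 * exp (- 30)" using h(2)[OF \<xi>0] \<xi>0 by simp_all
    show "((\<lambda>\<xi>. family_displacement (h \<xi>0) \<xi>) has_real_derivative 0) (at \<xi>0)"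
      using \<xi>0 \<xi>1(2) by (intro family_displacement_derivative_if_not_two_orbits h(2-3) not_two) auto
  qed
  then obtain k where k: "\<And>\<xi>. \<xi> \<in> {0<..<\<xi>1} \<Longrightarrow> h \<xi> = k"
    using has_field_derivative_zero_constant[of "{0<..<\<xi>1}" h]
    by (force intro: has_field_derivative_at_within)
  have "k = 0" using h(1) k by (intro eq_0_if_abs_le_linear[OF \<xi>1(1)]) force
  then show ?thesis using that \<xi>1 h(2) k by force
qed

theorem two_hyperbolic_orbits_exist: "\<exists>a0 a1 a2 b0 b1 b2 :: real. two_hyperbolic_orbits a0 a1 a2 b0 b1 b2"
proof (rule ccontr)
  assume "\<not> ?thesis"
  then have "\<And>\<beta>. \<not> two_hyperbolic_orbits 0 0 1 \<beta> 1 0" by blast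
  then obtain \<xi>1 where "0 < \<xi>1" "\<xi>1 \<le> exp (- 60)" "\<And>\<xi>. 0 < \<xi> \<Longrightarrow> \<xi> < \<xi>1 \<Longrightarrow> family_displacement 0 \<xi> = 0"
    by (rule family_zero_displacement_if_not_two_orbits) blast
  then have "abel_center 0 0 1 0 1 0" by (rule family_center_if_displacement_vanishes)
  from abel_equation.conditions_if_center[OF this] show False by simp
qed

theorem theoremB:
  shows
  "(\<forall>a0 a1 a2 b0 b1 b2 :: real.
      abel_center a0 a1 a2 b0 b1 b2 \<longleftrightarrow> (a0 = 0 \<and> b0 = 0 \<and> a2 * b1 - a1 * b2 = 0))
   \<and>
   (\<forall>a0 a1 a2 b0 b1 b2 :: real.
      \<not> abel_center a0 a1 a2 b0 b1 b2 \<and>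
      (a0\<^sup>2 \<ge> a1\<^sup>2 + a2\<^sup>2 \<or> b0\<^sup>2 \<ge> b1\<^sup>2 + b2\<^sup>2 \<or>
       (a2 * b0 - a0 * b2)\<^sup>2 + (a0 * b1 - a1 * b0)\<^sup>2 \<ge> (a2 * b1 - a1 * b2)\<^sup>2)
      \<longrightarrow>
      (\<forall>x y. abel_periodic_orbit a0 a1 a2 b0 b1 b2 x \<and> nonzero_orbit x \<and>
             abel_periodic_orbit a0 a1 a2 b0 b1 b2 y \<and> nonzero_orbit y
             \<longrightarrow> (\<forall>t\<in>{0..1}. x t = y t))
      \<and>
      (\<forall>x. abel_periodic_orbit a0 a1 a2 b0 b1 b2 x \<and> nonzero_orbit x
             \<longrightarrow> abel_hyperbolic a0 a1 a2 b0 b1 b2 (x 0)))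
   \<and>
   (\<exists>a0 a1 a2 b0 b1 b2 :: real. \<exists>x y.
      abel_periodic_orbit a0 a1 a2 b0 b1 b2 x \<and> nonzero_orbit x \<and>
      abel_hyperbolic a0 a1 a2 b0 b1 b2 (x 0) \<and>
      abel_periodic_orbit a0 a1 a2 b0 b1 b2 y \<and> nonzero_orbit y \<and>
      abel_hyperbolic a0 a1 a2 b0 b1 b2 (y 0) \<and>
      x 0 \<noteq> y 0)"
proof -
  have center_iff: "abel_center a0 a1 a2 b0 b1 b2 \<longleftrightarrow> (a0 = 0 \<and> b0 = 0 \<and> a2 * b1 - a1 * b2 = 0)"
    for a0 a1 a2 b0 b1 b2 :: real
    using abel_equation.conditions_if_center abel_equation.center_if_conditions by blast
  have "(\<forall>t\<in>{0..1}. x t = y t) \<and> abel_hyperbolic a0 a1 a2 b0 b1 b2 (x 0)"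
    if "\<not> abel_center a0 a1 a2 b0 b1 b2" "a1\<^sup>2 + a2\<^sup>2 \<le> a0\<^sup>2 \<or> b1\<^sup>2 + b2\<^sup>2 \<le> b0\<^sup>2 \<or>
      (a2 * b1 - a1 * b2)\<^sup>2 \<le> (a2 * b0 - a0 * b2)\<^sup>2 + (a0 * b1 - a1 * b0)\<^sup>2"
      "abel_periodic_orbit a0 a1 a2 b0 b1 b2 x \<and> nonzero_orbit x"
      "abel_periodic_orbit a0 a1 a2 b0 b1 b2 y \<and> nonzero_orbit y"
    for a0 a1 a2 b0 b1 b2 :: real and x y
    using abel_equation.at_most_one_nonzero_periodic_orbit[OF _ that(2-4)] that(1) center_iff by blast
  then show ?thesis using center_iff two_hyperbolic_orbits_exist by blast
qed

end
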